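(* Let $\{Y_j\}_{j\in\mathbb{Z}}$ be i.i.d. with $P(|Y_1|>x)=x^{-\alpha}h(x)$ for $x>0$, where $\alpha\in(0,2)$ and $h$ is slowly varying at $+\infty$, with $EY_1=0$ if $\alpha>1$ and $Y_1$ symmetric if $\alpha=1$. Let $\{c_{n,j}: n\in\mathbb{N}, j\in\mathbb{Z}\}$ be real numbers such that for each $n$, $\sum_{j\in\mathbb{Z}}|c_{n,j}|^\alpha h(|c_{n,j}|^{-1})<+\infty$, and set $V_n=\sum_{j\in\mathbb{Z}}c_{n,j}Y_j$ (an almost surely convergent series). Then $V_n\to0$ in probability if, and only if, $\sum_{j\in\mathbb{Z}}|c_{n,j}|^\alpha h(|c_{n,j}|^{-1})\to0$ as $n\to\infty$.
   Context: Terms $|c|^\alpha h(1/|c|)$ are interpreted as $0$ when $c=0$ (note $|c|^\alpha h(1/|c|)=P(|c\,Y_1|>1)$ for $c\neq0$). *)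

theory Defs
  imports "HOL-Probability.Probability"
begin

definition slowly_varying :: "(real \<Rightarrow> real) \<Rightarrow> bool" where
  "slowly_varying h \<longleftrightarrow>
     (\<forall>\<^sub>F x in at_top. h x > 0) \<and>
     (\<forall>l>0. ((\<lambda>x. h (l * x) / h x) \<longlongrightarrow> 1) at_top)"

definition tail_term :: "real \<Rightarrow> (real \<Rightarrow> real) \<Rightarrow> real \<Rightarrow> real" where
  "tail_term \<alpha> h c = (if c = 0 then 0 else \<bar>c\<bar> powr \<alpha> * h (1 / \<bar>c\<bar>))"

definition (in prob_space) tendsto_zero_in_prob :: "(nat \<Rightarrow> 'a \<Rightarrow> real) \<Rightarrow> bool" where
  "tendsto_zero_in_prob V \<longleftrightarrow>
     (\<forall>\<epsilon>>0. (\<lambda>n. prob {\<omega> \<in> space M. \<bar>V n \<omega>\<bar> > \<epsilon>}) \<longlonglongrightarrow> 0)"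

end

(*
  The tail sum is the sum over j of P(|c_{n,j} Y_j| > 1).  If it vanishes, V_n coincides with
  the series of the truncations c_{n,j} Y_j 1{|c_{n,j} Y_j| <= 1} outside an event of small
  probability.  Karamata-type
  bounds for the truncated moments of the regularly varying Y_1 (together with E Y_1 = 0 if
  alpha > 1 and symmetry if alpha = 1) bound the second moment of the truncated series by a
  multiple of the tail sum and its square, and Chebyshev's inequality concludes.

  Conversely, regular variation spreads the law of c_{n,j} Y_j on the event |c_{n,j} Y_j| > 1
  over intervals much longer than any fixed window, so by independence that event rarely
  leaves V_n small.  Hence P(|V_n| > delta) dominates 1 - exp(- tail sum) up to a small error,
  and a short combinatorial argument turns this into a linear bound on the tail sum.
*)

theory Submission
  imports Defs
begin

lemma half_le_one_minus_exp_neg: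
  fixes s :: real
  assumes "0 \<le> s" "s \<le> 1"
  shows "s / 2 \<le> 1 - exp (- s)"
proof -
  have "exp (- s) \<le> 1 / (1 + s)"
    using exp_ge_add_one_self[of s] assms by (simp add: exp_minus field_simps)
  also have "1 / (1 + s) \<le> 1 - s / 2"
  proof -
    have "s * s \<le> s" using assms by (simp add: mult_left_le)
    then show ?thesis using assms by (simp add: field_simps)
  qed
  finally show ?thesis by simp
qed

lemma abs_mult_add_le_iff_interval:
  fixes c r e :: real
  assumes "c \<noteq> 0"
  obtains u where "\<And>y. \<bar>c * y + r\<bar> \<le> e \<longleftrightarrow> u \<le> y \<and> y \<le> u + 2 * e / \<bar>c\<bar>"
proof (cases "c > 0")
  case True
  have "\<bar>c * y + r\<bar> \<le> e \<longleftrightarrow> (- r - e) / c \<le> y \<and> y \<le> (- r + e) / c" for y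
    using True by (auto simp: abs_le_iff pos_divide_le_eq pos_le_divide_eq mult.commute)
  moreover have "(- r + e) / c = (- r - e) / c + 2 * e / \<bar>c\<bar>"
    using True by (simp add: field_simps)
  ultimately show ?thesis by (intro that) simp
next
  case False
  then have "c < 0" using assms by simp
  then have "\<bar>c * y + r\<bar> \<le> e \<longleftrightarrow> (- r + e) / c \<le> y \<and> y \<le> (- r - e) / c" for y
    by (auto simp: abs_le_iff neg_divide_le_eq neg_le_divide_eq mult.commute)
  moreover have "(- r - e) / c = (- r + e) / c + 2 * e / \<bar>c\<bar>"
    using \<open>c < 0\<close> by (simp add: field_simps)
  ultimately show ?thesis by (intro that) simp
qed

lemma real_doubling_induct:
  fixes x0 :: real
  assumes "x0 > 0" "x0 \<le> y"
    and base: "\<And>y. x0 \<le> y \<Longrightarrow> y \<le> 2 * x0 \<Longrightarrow> P y"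
    and double: "\<And>y. x0 \<le> y \<Longrightarrow> P y \<Longrightarrow> P (2 * y)"
  shows "P y"
proof -
  have "\<forall>y. x0 \<le> y \<and> y \<le> 2 ^ Suc m * x0 \<longrightarrow> P y" for m
  proof (induction m)
    case 0
    then show ?case using base by simp
  next
    case (Suc m)
    show ?case
    proof (intro allI impI)
      fix y assume y: "x0 \<le> y \<and> y \<le> 2 ^ Suc (Suc m) * x0"
      show "P y"
      proof (cases "y \<le> 2 * x0")
        case True
        then show ?thesis using base y by blast
      next
        case False
        then have "P (y / 2)" using Suc y by auto
        then show ?thesis using double[of "y / 2"] False by simp
      qed
    qed
  qed
  moreover obtain m where "y / x0 < 2 ^ m"
    using real_arch_pow[of 2 "y / x0"] by auto
  then have "y \<le> 2 ^ Suc m * x0"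
    using assms(1) by (simp add: field_simps) (smt (verit) mult_left_mono one_le_power)
  ultimately show ?thesis using assms(2) by blast
qed

text \<open>Adding one \<open>p j \<le> 1/2\<close> to a sum already bounded by \<open>4 \<pi> < 1/2\<close> keeps it below \<open>1\<close>,
  where \<open>1 - exp (- s) \<ge> s / 2\<close>.\<close>
lemma sum_le_of_subset_exp_bounds:
  fixes p :: "'i \<Rightarrow> real"
  assumes "finite I" and p: "\<And>j. j \<in> I \<Longrightarrow> 0 \<le> p j \<and> p j \<le> 1/2"
    and \<pi>: "0 \<le> \<pi>" "\<pi> < 1/8"
    and subsets: "\<And>J. J \<subseteq> I \<Longrightarrow> 1 - exp (- (\<Sum>j\<in>J. p j)) \<le> \<pi> + (\<Sum>j\<in>J. p j) / 4"
  shows "(\<Sum>j\<in>I. p j) \<le> 4 * \<pi>"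
  using \<open>finite I\<close> subset_refl[of I]
proof (induction I rule: finite_subset_induct')
  case empty
  then show ?case using \<pi> by simp
next
  case (insert a F)
  define s where "s = (\<Sum>j\<in>insert a F. p j)"
  have "s = p a + (\<Sum>j\<in>F. p j)" and "0 \<le> (\<Sum>j\<in>F. p j)"
    using insert p by (auto simp: s_def intro!: sum_nonneg)
  then have "0 \<le> s" "s \<le> 1" using insert p[of a] \<pi> by auto
  moreover have "1 - exp (- s) \<le> \<pi> + s / 4"
    using subsets[of "insert a F"] insert by (simp add: s_def)
  ultimately have "s / 2 \<le> \<pi> + s / 4"
    using half_le_one_minus_exp_neg[of s] by linarith
  then show ?case by (simp add: s_def)
qed

lemma infsum_le_of_symmetric_partial_sums:
  fixes f :: "int \<Rightarrow> real"
  assumes "f summable_on UNIV" "\<And>j. 0 \<le> f j"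
    and partial: "\<And>N. N \<ge> N1 \<Longrightarrow> (\<Sum>j\<in>{- int N..int N}. f j) \<le> b"
  shows "(\<Sum>\<^sub>\<infinity>j. f j) \<le> b"
proof (rule infsum_le_finite_sums[OF assms(1)])
  fix Q :: "int set" assume "finite Q"
  define N where "N = max N1 (nat (Max (insert 0 (abs ` Q))))"
  have "\<bar>j\<bar> \<le> Max (insert 0 (abs ` Q))" if "j \<in> Q" for j
    using \<open>finite Q\<close> that by (intro Max_ge) auto
  then have "Q \<subseteq> {- int N..int N}" by (force simp: N_def)
  then have "sum f Q \<le> (\<Sum>j\<in>{- int N..int N}. f j)"
    using assms(2) by (intro sum_mono2) auto
  also have "\<dots> \<le> b" using partial by (simp add: N_def)
  finally show "sum f Q \<le> b" .
qed

context prob_space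
begin

lemma prob_abs_gt_add_le:
  fixes Z W :: "'a \<Rightarrow> real"
  assumes [measurable]: "Z \<in> borel_measurable M" "W \<in> borel_measurable M"
  shows "prob {\<omega> \<in> space M. \<bar>Z \<omega>\<bar> > a + b}
    \<le> prob {\<omega> \<in> space M. \<bar>Z \<omega> - W \<omega>\<bar> > a} + prob {\<omega> \<in> space M. \<bar>W \<omega>\<bar> > b}"
proof -
  have "prob {\<omega> \<in> space M. \<bar>Z \<omega>\<bar> > a + b}
      \<le> prob ({\<omega> \<in> space M. \<bar>Z \<omega> - W \<omega>\<bar> > a} \<union> {\<omega> \<in> space M. \<bar>W \<omega>\<bar> > b})"
    by (intro finite_measure_mono) auto
  also have "\<dots> \<le> prob {\<omega> \<in> space M. \<bar>Z \<omega> - W \<omega>\<bar> > a} + prob {\<omega> \<in> space M. \<bar>W \<omega>\<bar> > b}"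
    by (intro measure_Un_le) auto
  finally show ?thesis .
qed

lemma AE_tendsto_imp_tendsto_prob:
  fixes S :: "nat \<Rightarrow> 'a \<Rightarrow> real"
  assumes [measurable]: "\<And>N. S N \<in> borel_measurable M" "W \<in> borel_measurable M"
    and "AE \<omega> in M. (\<lambda>N. S N \<omega>) \<longlonglongrightarrow> W \<omega>" and "e > 0"
  shows "(\<lambda>N. prob {\<omega> \<in> space M. \<bar>S N \<omega> - W \<omega>\<bar> > e}) \<longlonglongrightarrow> 0"
proof -
  have "(\<lambda>N. \<integral>\<omega>. indicator {\<omega> \<in> space M. \<bar>S N \<omega> - W \<omega>\<bar> > e} \<omega> \<partial>M) \<longlonglongrightarrow> (\<integral>\<omega>. (0::real) \<partial>M)"
  proof (rule integral_dominated_convergence[where w="\<lambda>_. 1"])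
    show "AE \<omega> in M. (\<lambda>N. indicator {\<omega> \<in> space M. \<bar>S N \<omega> - W \<omega>\<bar> > e} \<omega>) \<longlonglongrightarrow> (0::real)"
      using assms(3)
    proof eventually_elim
      case (elim \<omega>)
      then have "\<forall>\<^sub>F N in sequentially. dist (S N \<omega>) (W \<omega>) < e"
        using \<open>e > 0\<close> by (rule tendstoD)
      then have "\<forall>\<^sub>F N in sequentially. indicator {\<omega> \<in> space M. \<bar>S N \<omega> - W \<omega>\<bar> > e} \<omega> = (0::real)"
        by eventually_elim (auto simp: indicator_def dist_real_def)
      then show ?case by (rule tendsto_eventually)
    qed
  qed (auto simp: indicator_def)
  then show ?thesis by (simp add: Int_absorb2 subset_iff)
qed

text \<open>Conditioning on \<open>R\<close>: by Fubini on the joint law, a bound that is uniform over the shift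
  \<open>r\<close> survives replacing \<open>r\<close> by an independent random variable.\<close>
lemma prob_indep_shift_le:
  fixes X R :: "'a \<Rightarrow> real"
  assumes indep: "indep_var borel X borel R" and B: "B \<in> sets borel"
    and bound: "\<And>r. prob {\<omega> \<in> space M. \<bar>X \<omega> + r\<bar> \<le> e \<and> X \<omega> \<in> B} \<le> b"
  shows "prob {\<omega> \<in> space M. \<bar>X \<omega> + R \<omega>\<bar> \<le> e \<and> X \<omega> \<in> B} \<le> b"
proof -
  have [measurable]: "X \<in> borel_measurable M" "R \<in> borel_measurable M"
    and joint: "distr M borel X \<Otimes>\<^sub>M distr M borel R = distr M (borel \<Otimes>\<^sub>M borel) (\<lambda>\<omega>. (X \<omega>, R \<omega>))"
    using indep unfolding indep_var_distribution_eq by auto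
  interpret PX: prob_space "distr M borel X" by (intro prob_space_distr) auto
  interpret PR: prob_space "distr M borel R" by (intro prob_space_distr) auto
  interpret P: pair_prob_space "distr M borel X" "distr M borel R" ..
  define D where "D = {p \<in> space (borel \<Otimes>\<^sub>M borel). \<bar>fst p + snd p\<bar> \<le> e \<and> fst p \<in> B}"
  have D: "D \<in> sets (borel \<Otimes>\<^sub>M borel)" unfolding D_def using B by measurable
  have "0 \<le> b" using bound[of 0] measure_nonneg[of M] by (meson order.trans)
  have slice: "emeasure (distr M borel X) ((\<lambda>x. (x, r)) -` D) \<le> ennreal b" for r
  proof -
    have S: "{x. \<bar>x + r\<bar> \<le> e \<and> x \<in> B} \<in> sets borel"
      using B by (simp add: Collect_conj_eq) measurable
    have "(\<lambda>x. (x, r)) -` D = {x. \<bar>x + r\<bar> \<le> e \<and> x \<in> B}"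
      by (auto simp: D_def space_pair_measure)
    then have "emeasure (distr M borel X) ((\<lambda>x. (x, r)) -` D)
        = emeasure M {\<omega> \<in> space M. \<bar>X \<omega> + r\<bar> \<le> e \<and> X \<omega> \<in> B}"
      using S by (simp add: emeasure_distr vimage_def Int_def conj_commute)
    also have "\<dots> \<le> ennreal b"
      using bound by (simp add: emeasure_eq_measure ennreal_leI)
    finally show ?thesis .
  qed
  have "emeasure (distr M borel X \<Otimes>\<^sub>M distr M borel R) D
      = (\<integral>\<^sup>+ r. emeasure (distr M borel X) ((\<lambda>x. (x, r)) -` D) \<partial>distr M borel R)"
    using D by (intro P.emeasure_pair_measure_alt2) simp
  also have "\<dots> \<le> (\<integral>\<^sup>+ r. ennreal b \<partial>distr M borel R)"
    by (intro nn_integral_mono slice)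
  also have "\<dots> = ennreal b" using PR.emeasure_space_1 by simp
  finally have "measure (distr M borel X \<Otimes>\<^sub>M distr M borel R) D \<le> b"
    using \<open>0 \<le> b\<close> by (simp add: P.emeasure_eq_measure)
  moreover have "prob {\<omega> \<in> space M. \<bar>X \<omega> + R \<omega>\<bar> \<le> e \<and> X \<omega> \<in> B}
      = measure (distr M (borel \<Otimes>\<^sub>M borel) (\<lambda>\<omega>. (X \<omega>, R \<omega>))) D"
    using D by (subst measure_distr) (auto simp: D_def space_pair_measure intro!: arg_cong[where f=prob])
  ultimately show ?thesis by (simp add: joint)
qed

lemma integral_square_sum_indep_le:
  fixes Z :: "'i \<Rightarrow> 'a \<Rightarrow> real"
  assumes indep: "indep_vars (\<lambda>_. borel) Z I" and "finite I"
    and bounded: "\<And>i \<omega>. i \<in> I \<Longrightarrow> \<bar>Z i \<omega>\<bar> \<le> K"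
  shows "(\<integral>\<omega>. (\<Sum>i\<in>I. Z i \<omega>)\<^sup>2 \<partial>M)
    \<le> (\<Sum>i\<in>I. \<integral>\<omega>. (Z i \<omega>)\<^sup>2 \<partial>M) + (\<Sum>i\<in>I. \<bar>\<integral>\<omega>. Z i \<omega> \<partial>M\<bar>)\<^sup>2"
proof -
  have [measurable]: "i \<in> I \<Longrightarrow> Z i \<in> borel_measurable M" for i
    using indep unfolding indep_vars_def by auto
  have int: "integrable M (Z i)" if "i \<in> I" for i
    using bounded that by (intro integrable_const_bound[where B=K]) auto
  have int_prod: "integrable M (\<lambda>\<omega>. Z i \<omega> * Z j \<omega>)" if "i \<in> I" "j \<in> I" for i j
    using bounded that by (intro integrable_const_bound[where B="K * K"])
      (auto simp: abs_mult intro!: mult_mono' order_trans[OF abs_ge_zero])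
  have cross: "(\<integral>\<omega>. Z i \<omega> * Z j \<omega> \<partial>M) = (\<integral>\<omega>. Z i \<omega> \<partial>M) * (\<integral>\<omega>. Z j \<omega> \<partial>M)"
    if "i \<in> I" "j \<in> I" "i \<noteq> j" for i j
  proof -
    have "indep_vars (\<lambda>_. borel) Z {i, j}"
      by (rule indep_vars_subset[OF indep]) (use that in auto)
    then have "(\<integral>\<omega>. (\<Prod>k\<in>{i, j}. Z k \<omega>) \<partial>M) = (\<Prod>k\<in>{i, j}. \<integral>\<omega>. Z k \<omega> \<partial>M)"
      using int that by (intro indep_vars_lebesgue_integral) auto
    then show ?thesis using that by simp
  qed
  have "(\<integral>\<omega>. (\<Sum>i\<in>I. Z i \<omega>)\<^sup>2 \<partial>M) = (\<Sum>i\<in>I. \<Sum>j\<in>I. \<integral>\<omega>. Z i \<omega> * Z j \<omega> \<partial>M)"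
    using int_prod by (simp add: power2_eq_square sum_product)
  also have "\<dots> \<le> (\<Sum>i\<in>I. \<Sum>j\<in>I. (if i = j then \<integral>\<omega>. (Z i \<omega>)\<^sup>2 \<partial>M else 0)
      + \<bar>\<integral>\<omega>. Z i \<omega> \<partial>M\<bar> * \<bar>\<integral>\<omega>. Z j \<omega> \<partial>M\<bar>)"
    using cross by (intro sum_mono) (auto simp: power2_eq_square abs_mult[symmetric])
  also have "\<dots> = (\<Sum>i\<in>I. \<integral>\<omega>. (Z i \<omega>)\<^sup>2 \<partial>M) + (\<Sum>i\<in>I. \<bar>\<integral>\<omega>. Z i \<omega> \<partial>M\<bar>)\<^sup>2"
    using \<open>finite I\<close> by (simp add: sum.distrib sum.delta power2_eq_square sum_product)
  finally show ?thesis .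
qed

lemma prob_exists_not_in_ge_indep:
  fixes Z :: "'i \<Rightarrow> 'a \<Rightarrow> real"
  assumes indep: "indep_vars (\<lambda>_. borel) Z I" and "finite J" "J \<subseteq> I" and B: "B \<in> sets borel"
  shows "1 - exp (- (\<Sum>j\<in>J. prob {\<omega> \<in> space M. Z j \<omega> \<notin> B}))
    \<le> prob {\<omega> \<in> space M. \<exists>j\<in>J. Z j \<omega> \<notin> B}"
proof (cases "J = {}")
  case True
  then show ?thesis by simp
next
  case False
  define E where "E j = {\<omega> \<in> space M. Z j \<omega> \<in> B}" for j
  have [measurable]: "j \<in> I \<Longrightarrow> Z j \<in> borel_measurable M" for j
    using indep unfolding indep_vars_def by auto
  have events: "E j \<in> events" if "j \<in> J" for j
    using that \<open>J \<subseteq> I\<close> B by (auto simp: E_def)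
  have "indep_events E I"
    unfolding E_def using B by (intro indep_eventsI_indep_vars[OF indep]) auto
  then have "prob (\<Inter>j\<in>J. E j) = (\<Prod>j\<in>J. prob (E j))"
    using False \<open>finite J\<close> \<open>J \<subseteq> I\<close> unfolding indep_events_def by blast
  also have "\<dots> \<le> (\<Prod>j\<in>J. exp (- prob (space M - E j)))"
  proof (intro prod_mono conjI)
    fix j assume "j \<in> J"
    have "1 + - prob (space M - E j) \<le> exp (- prob (space M - E j))"
      by (rule exp_ge_add_one_self)
    then show "prob (E j) \<le> exp (- prob (space M - E j))"
      using events[OF \<open>j \<in> J\<close>] by (simp add: prob_compl)
  qed simp
  also have "\<dots> = exp (- (\<Sum>j\<in>J. prob (space M - E j)))"
    using \<open>finite J\<close> by (simp add: exp_sum[symmetric] sum_negf)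
  finally have "1 - exp (- (\<Sum>j\<in>J. prob (space M - E j))) \<le> prob (space M - (\<Inter>j\<in>J. E j))"
    using events False \<open>finite J\<close> by (subst prob_compl) auto
  moreover have "space M - (\<Inter>j\<in>J. E j) = {\<omega> \<in> space M. \<exists>j\<in>J. Z j \<omega> \<notin> B}"
    and "space M - E j = {\<omega> \<in> space M. Z j \<omega> \<notin> B}" for j
    using False by (auto simp: E_def)
  ultimately show ?thesis by simp
qed

lemma prob_abs_gt_le_of_AE_tendsto:
  fixes S :: "nat \<Rightarrow> 'a \<Rightarrow> real"
  assumes [measurable]: "\<And>N. S N \<in> borel_measurable M" "W \<in> borel_measurable M"
    and lim: "AE \<omega> in M. (\<lambda>N. S N \<omega>) \<longlonglongrightarrow> W \<omega>" and "e > 0"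
    and bound: "\<And>N. prob {\<omega> \<in> space M. \<bar>S N \<omega>\<bar> > a} \<le> b"
  shows "prob {\<omega> \<in> space M. \<bar>W \<omega>\<bar> > e + a} \<le> b"
proof (rule LIMSEQ_le_const)
  have "(\<lambda>N. prob {\<omega> \<in> space M. \<bar>S N \<omega> - W \<omega>\<bar> > e}) \<longlonglongrightarrow> 0"
    using AE_tendsto_imp_tendsto_prob[OF _ _ lim \<open>e > 0\<close>] by simp
  then show "(\<lambda>N. prob {\<omega> \<in> space M. \<bar>S N \<omega> - W \<omega>\<bar> > e} + b) \<longlonglongrightarrow> b"
    using tendsto_add[OF _ tendsto_const] by fastforce
  show "\<exists>N0. \<forall>N\<ge>N0. prob {\<omega> \<in> space M. \<bar>W \<omega>\<bar> > e + a}
      \<le> prob {\<omega> \<in> space M. \<bar>S N \<omega> - W \<omega>\<bar> > e} + b"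
  proof (intro exI[of _ 0] allI impI)
    fix N
    show "prob {\<omega> \<in> space M. \<bar>W \<omega>\<bar> > e + a} \<le> prob {\<omega> \<in> space M. \<bar>S N \<omega> - W \<omega>\<bar> > e} + b"
      using prob_abs_gt_add_le[of W "S N" e a] bound[of N] by (simp add: abs_minus_commute)
  qed
qed

lemma eventually_prob_abs_gt_less_of_AE_tendsto:
  fixes S :: "nat \<Rightarrow> 'a \<Rightarrow> real"
  assumes [measurable]: "\<And>N. S N \<in> borel_measurable M" "W \<in> borel_measurable M"
    and lim: "AE \<omega> in M. (\<lambda>N. S N \<omega>) \<longlonglongrightarrow> W \<omega>" and "e > 0"
    and less: "prob {\<omega> \<in> space M. \<bar>W \<omega>\<bar> > a} < b"
  shows "\<forall>\<^sub>F N in sequentially. prob {\<omega> \<in> space M. \<bar>S N \<omega>\<bar> > e + a} < b"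
proof -
  have "\<forall>\<^sub>F N in sequentially. prob {\<omega> \<in> space M. \<bar>S N \<omega> - W \<omega>\<bar> > e} < b - prob {\<omega> \<in> space M. \<bar>W \<omega>\<bar> > a}"
    using AE_tendsto_imp_tendsto_prob[OF _ _ lim \<open>e > 0\<close>] less by (intro order_tendstoD(2)) auto
  then show ?thesis
  proof eventually_elim
    case (elim N)
    then show ?case using prob_abs_gt_add_le[of "S N" W e a] by simp
  qed
qed

end

section \<open>Regularly varying tails and truncated moments\<close>

definition truncated :: "real \<Rightarrow> real \<Rightarrow> real" where
  "truncated c y = (if \<bar>c * y\<bar> \<le> 1 then c * y else 0)"

lemma truncated_measurable[measurable]: "truncated c \<in> borel_measurable borel"
  unfolding truncated_def by measurable

lemma abs_truncated_le_1: "\<bar>truncated c y\<bar> \<le> 1"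
  by (simp add: truncated_def)

lemma abs_mult_le_1_iff:
  fixes c y :: real
  assumes "c \<noteq> 0"
  shows "\<bar>c * y\<bar> \<le> 1 \<longleftrightarrow> \<bar>y\<bar> \<le> 1 / \<bar>c\<bar>"
  using assms by (simp add: abs_mult pos_le_divide_eq mult.commute)

lemma truncated_eq:
  assumes "c \<noteq> 0"
  shows "truncated c y = (if \<bar>y\<bar> \<le> 1 / \<bar>c\<bar> then c * y else 0)"
  using abs_mult_le_1_iff[OF assms] by (simp add: truncated_def)

locale heavy_tailed = prob_space +
  fixes X :: "'a \<Rightarrow> real" and \<alpha> :: real and h :: "real \<Rightarrow> real"
  assumes X_measurable[measurable]: "X \<in> borel_measurable M"
    and alpha_pos: "0 < \<alpha>" and alpha_less_2: "\<alpha> < 2"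
    and slowly_varying_h: "slowly_varying h"
    and tail_eq: "\<And>x. x > 0 \<Longrightarrow> prob {\<omega> \<in> space M. \<bar>X \<omega>\<bar> > x} = x powr (-\<alpha>) * h x"
    and mean_zero: "\<alpha> > 1 \<Longrightarrow> integrable M X \<and> expectation X = 0"
    and symmetric: "\<alpha> = 1 \<Longrightarrow> distr M borel (\<lambda>\<omega>. - X \<omega>) = distr M borel X"
begin

definition tail_prob :: "real \<Rightarrow> real" where
  "tail_prob x = prob {\<omega> \<in> space M. \<bar>X \<omega>\<bar> > x}"

lemma tail_prob_nonneg: "0 \<le> tail_prob x"
  by (simp add: tail_prob_def)

lemma tail_prob_antimono: "x \<le> y \<Longrightarrow> tail_prob y \<le> tail_prob x"
  unfolding tail_prob_def by (intro finite_measure_mono) auto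

lemma tail_prob_integral: "tail_prob x = (\<integral>\<omega>. indicator {\<omega> \<in> space M. \<bar>X \<omega>\<bar> > x} \<omega> \<partial>M)"
  by (simp add: tail_prob_def Int_absorb2 subset_iff)

lemma integrable_tail_indicator: "integrable M (indicator {\<omega> \<in> space M. \<bar>X \<omega>\<bar> > x} :: 'a \<Rightarrow> real)"
  by (intro integrable_real_indicator) (auto simp: less_top[symmetric])

lemma tail_prob_pos:
  assumes "x > 0"
  shows "tail_prob x > 0"
proof -
  obtain x0 where x0: "\<And>z. z \<ge> x0 \<Longrightarrow> h z > 0"
    using slowly_varying_h unfolding slowly_varying_def eventually_at_top_linorder by auto
  define z where "z = max x x0"
  have "tail_prob z > 0"
    using tail_eq[of z] x0[of z] assms by (simp add: tail_prob_def z_def)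
  then show ?thesis using tail_prob_antimono[of x z] by (simp add: z_def)
qed

lemma tail_prob_ratio_tendsto:
  assumes "l > 0"
  shows "((\<lambda>x. tail_prob (l * x) / tail_prob x) \<longlongrightarrow> l powr (-\<alpha>)) at_top"
proof -
  have "((\<lambda>x. l powr (-\<alpha>) * (h (l * x) / h x)) \<longlongrightarrow> l powr (-\<alpha>) * 1) at_top"
    using slowly_varying_h assms unfolding slowly_varying_def by (intro tendsto_intros) auto
  moreover have "\<forall>\<^sub>F x in at_top. l powr (-\<alpha>) * (h (l * x) / h x) = tail_prob (l * x) / tail_prob x"
    using eventually_gt_at_top[of 0]
  proof eventually_elim
    case (elim x)
    then have "x powr (-\<alpha>) > 0" by simp
    then show ?case
      using tail_eq[of x] tail_eq[of "l * x"] elim assms by (simp add: tail_prob_def powr_mult)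
  qed
  ultimately show ?thesis by (simp add: tendsto_cong)
qed

lemma tail_prob_ratio_eventually_ge:
  assumes "l > 0" "b < l powr (-\<alpha>)"
  obtains x0 where "x0 > 0" "\<And>x. x \<ge> x0 \<Longrightarrow> b * tail_prob x \<le> tail_prob (l * x)"
proof -
  obtain x1 where x1: "\<And>x. x \<ge> x1 \<Longrightarrow> b < tail_prob (l * x) / tail_prob x"
    using order_tendstoD(1)[OF tail_prob_ratio_tendsto[OF assms(1)] assms(2)]
    by (auto simp: eventually_at_top_linorder)
  show ?thesis
  proof (rule that[of "max x1 1"])
    fix x assume "max x1 1 \<le> x"
    then show "b * tail_prob x \<le> tail_prob (l * x)"
      using x1[of x] tail_prob_pos[of x] by (simp add: field_simps)
  qed simp
qed

lemma tail_prob_ratio_eventually_le: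
  assumes "l > 0" "l powr (-\<alpha>) < b"
  obtains x0 where "x0 > 0" "\<And>x. x \<ge> x0 \<Longrightarrow> tail_prob (l * x) \<le> b * tail_prob x"
proof -
  obtain x1 where x1: "\<And>x. x \<ge> x1 \<Longrightarrow> tail_prob (l * x) / tail_prob x < b"
    using order_tendstoD(2)[OF tail_prob_ratio_tendsto[OF assms(1)] assms(2)]
    by (auto simp: eventually_at_top_linorder)
  show ?thesis
  proof (rule that[of "max x1 1"])
    fix x assume "max x1 1 \<le> x"
    then show "tail_prob (l * x) \<le> b * tail_prob x"
      using x1[of x] tail_prob_pos[of x] by (simp add: field_simps)
  qed simp
qed

lemma tail_prob_eventually_le:
  assumes "e > 0"
  obtains x0 where "x0 > 0" "\<And>x. x \<ge> x0 \<Longrightarrow> tail_prob x \<le> e"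
proof -
  have "(\<lambda>n. \<integral>\<omega>. indicator {\<omega> \<in> space M. \<bar>X \<omega>\<bar> > real n} \<omega> \<partial>M) \<longlonglongrightarrow> (\<integral>\<omega>. (0::real) \<partial>M)"
  proof (rule integral_dominated_convergence[where w="\<lambda>_. 1"])
    show "AE \<omega> in M. (\<lambda>n. indicator {\<omega> \<in> space M. \<bar>X \<omega>\<bar> > real n} \<omega>) \<longlonglongrightarrow> (0::real)"
    proof (rule AE_I2)
      fix \<omega> assume "\<omega> \<in> space M"
      obtain N where "\<bar>X \<omega>\<bar> < real N" using reals_Archimedean2 by blast
      then have "\<forall>\<^sub>F n in sequentially. indicator {\<omega> \<in> space M. \<bar>X \<omega>\<bar> > real n} \<omega> = (0::real)"
        unfolding eventually_sequentially
        by (intro exI[of _ N]) (auto simp: indicator_def)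
      then show "(\<lambda>n. indicator {\<omega> \<in> space M. \<bar>X \<omega>\<bar> > real n} \<omega>) \<longlonglongrightarrow> (0::real)"
        by (rule tendsto_eventually)
    qed
  qed (auto simp: indicator_def)
  then have "(\<lambda>n. tail_prob (real n)) \<longlonglongrightarrow> 0"
    by (simp add: tail_prob_integral)
  from order_tendstoD(2)[OF this assms] obtain N where N: "tail_prob (real N) < e"
    by (auto simp: eventually_sequentially)
  show ?thesis
  proof (rule that[of "real N + 1"])
    fix x assume "real N + 1 \<le> x"
    then show "tail_prob x \<le> e" using N tail_prob_antimono[of "real N" x] by simp
  qed simp
qed

lemma tail_prob_doubling_upper:
  assumes "\<beta> > \<alpha>"
  obtains x0 where "x0 > 0" "\<And>y. y \<ge> x0 \<Longrightarrow> tail_prob y \<le> 2 powr \<beta> * tail_prob (2 * y)"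
proof -
  obtain x0 where "x0 > 0" and x0: "\<And>y. y \<ge> x0 \<Longrightarrow> 2 powr (-\<beta>) * tail_prob y \<le> tail_prob (2 * y)"
    using tail_prob_ratio_eventually_ge[of 2 "2 powr (-\<beta>)"] assms by auto
  moreover have "tail_prob y = 2 powr \<beta> * (2 powr (-\<beta>) * tail_prob y)" for y
    by (simp add: powr_minus)
  ultimately show ?thesis
    using that by (metis mult_left_mono powr_ge_zero)
qed

lemma tail_prob_doubling_lower:
  assumes "\<beta> < \<alpha>"
  obtains x0 where "x0 > 0" "\<And>y. y \<ge> x0 \<Longrightarrow> tail_prob (2 * y) \<le> 2 powr (-\<beta>) * tail_prob y"
  using tail_prob_ratio_eventually_le[of 2 "2 powr (-\<beta>)"] assms by auto

definition lower_moment :: "nat \<Rightarrow> real \<Rightarrow> real" where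
  "lower_moment p x = (\<integral>\<omega>. (if \<bar>X \<omega>\<bar> \<le> x then \<bar>X \<omega>\<bar> ^ p else 0) \<partial>M)"

definition upper_moment :: "real \<Rightarrow> real" where
  "upper_moment x = (\<integral>\<omega>. (if \<bar>X \<omega>\<bar> > x then \<bar>X \<omega>\<bar> else 0) \<partial>M)"

lemma integrable_lower_moment: "integrable M (\<lambda>\<omega>. if \<bar>X \<omega>\<bar> \<le> x then \<bar>X \<omega>\<bar> ^ p else 0)"
  by (rule integrable_const_bound[where B="\<bar>x\<bar> ^ p"]) (auto intro!: power_mono)

lemma integrable_upper_moment:
  assumes "\<alpha> > 1"
  shows "integrable M (\<lambda>\<omega>. if \<bar>X \<omega>\<bar> > x then \<bar>X \<omega>\<bar> else 0)"
proof (rule Bochner_Integration.integrable_bound[where f=X])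
  show "integrable M X" using mean_zero[OF assms] by blast
qed (auto intro: AE_I2)

lemma lower_moment_le:
  assumes "x \<ge> 0"
  shows "lower_moment p x \<le> x ^ p"
proof -
  have "lower_moment p x \<le> (\<integral>\<omega>. x ^ p \<partial>M)"
    unfolding lower_moment_def using assms
    by (intro integral_mono integrable_lower_moment) (auto intro!: power_mono)
  then show ?thesis by (simp add: prob_space)
qed

lemma lower_moment_double_le:
  assumes "y \<ge> 0"
  shows "lower_moment p (2 * y) \<le> lower_moment p y + (2 * y) ^ p * tail_prob y"
proof -
  have "\<bar>X \<omega>\<bar> ^ p \<le> (2 * y) ^ p" if "\<bar>X \<omega>\<bar> \<le> 2 * y" for \<omega>
    using that by (intro power_mono) auto
  then have "lower_moment p (2 * y) \<le> (\<integral>\<omega>. (if \<bar>X \<omega>\<bar> \<le> y then \<bar>X \<omega>\<bar> ^ p else 0)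
      + (2 * y) ^ p * indicator {\<omega> \<in> space M. \<bar>X \<omega>\<bar> > y} \<omega> \<partial>M)"
    unfolding lower_moment_def using assms
    by (intro integral_mono integrable_lower_moment Bochner_Integration.integrable_add
        integrable_mult_right integrable_tail_indicator)
      (auto simp: indicator_def)
  also have "\<dots> = lower_moment p y + (2 * y) ^ p * tail_prob y"
    by (subst Bochner_Integration.integral_add)
      (auto simp: lower_moment_def tail_prob_integral
        intro!: integrable_lower_moment integrable_mult_right integrable_tail_indicator)
  finally show ?thesis .
qed

lemma lower_moment_bound:
  assumes "real p > \<alpha>"
  obtains A x0 where "A > 0" "x0 > 0" "\<And>y. y \<ge> x0 \<Longrightarrow> lower_moment p y \<le> A * y ^ p * tail_prob y"
proof -
  define \<beta> where "\<beta> = (\<alpha> + real p) / 2"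
  have "\<alpha> < \<beta>" "\<beta> < real p" using assms by (auto simp: \<beta>_def)
  obtain x0 where "x0 > 0" and doubling: "\<And>y. y \<ge> x0 \<Longrightarrow> tail_prob y \<le> 2 powr \<beta> * tail_prob (2 * y)"
    using tail_prob_doubling_upper[OF \<open>\<alpha> < \<beta>\<close>] by auto
  have r: "2 powr \<beta> / 2 ^ p < 1"
    using \<open>\<beta> < real p\<close> by (simp add: powr_realpow[symmetric])
  define A where "A = max (1 / tail_prob (2 * x0)) (2 powr \<beta> / (1 - 2 powr \<beta> / 2 ^ p))"
  have G0: "tail_prob (2 * x0) > 0" using tail_prob_pos \<open>x0 > 0\<close> by simp
  have "A > 0" using G0 r by (auto simp: A_def max_def)
  have A_fixpoint: "(A / 2 ^ p + 1) * 2 powr \<beta> \<le> A"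
  proof -
    have "2 powr \<beta> = (2 powr \<beta> / (1 - 2 powr \<beta> / 2 ^ p)) * (1 - 2 powr \<beta> / 2 ^ p)"
      using r by simp
    also have "\<dots> \<le> A * (1 - 2 powr \<beta> / 2 ^ p)"
      using r by (intro mult_right_mono) (auto simp: A_def)
    finally show ?thesis by (simp add: field_simps)
  qed
  have "lower_moment p y \<le> A * y ^ p * tail_prob y" if "y \<ge> x0" for y
  proof (rule real_doubling_induct[OF \<open>x0 > 0\<close> that])
    fix y assume 1: "x0 \<le> y" "y \<le> 2 * x0"
    have "lower_moment p y \<le> y ^ p" using lower_moment_le \<open>x0 > 0\<close> 1 by simp
    also have "\<dots> = (1 / tail_prob (2 * x0)) * y ^ p * tail_prob (2 * x0)" using G0 by simp
    also have "\<dots> \<le> A * y ^ p * tail_prob y"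
      using 1 \<open>x0 > 0\<close> \<open>A > 0\<close> G0 tail_prob_antimono[of y "2 * x0"]
      by (intro mult_mono) (auto simp: A_def)
    finally show "lower_moment p y \<le> A * y ^ p * tail_prob y" .
  next
    fix y assume 2: "x0 \<le> y" "lower_moment p y \<le> A * y ^ p * tail_prob y"
    have "lower_moment p (2 * y) \<le> lower_moment p y + (2 * y) ^ p * tail_prob y"
      using lower_moment_double_le 2 \<open>x0 > 0\<close> by simp
    also have "\<dots> \<le> (A / 2 ^ p + 1) * (2 * y) ^ p * tail_prob y"
      using 2 by (simp add: field_simps power_mult_distrib)
    also have "\<dots> \<le> (A / 2 ^ p + 1) * (2 * y) ^ p * (2 powr \<beta> * tail_prob (2 * y))"
      using doubling[OF \<open>x0 \<le> y\<close>] \<open>A > 0\<close> 2 \<open>x0 > 0\<close> by (intro mult_left_mono) auto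
    also have "\<dots> = ((A / 2 ^ p + 1) * 2 powr \<beta>) * ((2 * y) ^ p * tail_prob (2 * y))"
      by (simp only: mult_ac)
    also have "\<dots> \<le> A * ((2 * y) ^ p * tail_prob (2 * y))"
      using A_fixpoint 2 \<open>x0 > 0\<close> tail_prob_nonneg
      by (intro mult_right_mono) auto
    also have "\<dots> = A * (2 * y) ^ p * tail_prob (2 * y)"
      by (simp only: mult_ac)
    finally show "lower_moment p (2 * y) \<le> A * (2 * y) ^ p * tail_prob (2 * y)" .
  qed
  with \<open>A > 0\<close> \<open>x0 > 0\<close> show ?thesis by (rule that)
qed

lemma upper_moment_le_double:
  assumes "\<alpha> > 1" "y \<ge> 0"
  shows "upper_moment y \<le> 2 * y * tail_prob y + upper_moment (2 * y)"
proof -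
  have "upper_moment y \<le> (\<integral>\<omega>. 2 * y * indicator {\<omega> \<in> space M. \<bar>X \<omega>\<bar> > y} \<omega>
      + (if \<bar>X \<omega>\<bar> > 2 * y then \<bar>X \<omega>\<bar> else 0) \<partial>M)"
    unfolding upper_moment_def using assms(2)
    by (intro integral_mono integrable_upper_moment[OF assms(1)] Bochner_Integration.integrable_add
        integrable_mult_right integrable_tail_indicator)
      (auto simp: indicator_def)
  also have "\<dots> = 2 * y * tail_prob y + upper_moment (2 * y)"
    by (subst Bochner_Integration.integral_add)
      (auto simp: upper_moment_def tail_prob_integral
        intro!: integrable_upper_moment[OF assms(1)] integrable_mult_right integrable_tail_indicator)
  finally show ?thesis .
qed

lemma upper_moment_dyadic_tendsto_0:
  assumes "\<alpha> > 1" "y > 0"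
  shows "(\<lambda>m. upper_moment (2 ^ m * y)) \<longlonglongrightarrow> 0"
proof -
  have "(\<lambda>m. \<integral>\<omega>. (if \<bar>X \<omega>\<bar> > 2 ^ m * y then \<bar>X \<omega>\<bar> else 0) \<partial>M) \<longlonglongrightarrow> (\<integral>\<omega>. (0::real) \<partial>M)"
  proof (rule integral_dominated_convergence[where w="\<lambda>\<omega>. \<bar>X \<omega>\<bar>"])
    show "AE \<omega> in M. (\<lambda>m. if \<bar>X \<omega>\<bar> > 2 ^ m * y then \<bar>X \<omega>\<bar> else 0) \<longlonglongrightarrow> (0::real)"
    proof (rule AE_I2)
      fix \<omega>
      obtain N where N: "\<bar>X \<omega>\<bar> / y < 2 ^ N" using real_arch_pow[of 2 "\<bar>X \<omega>\<bar> / y"] by auto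
      have "\<bar>X \<omega>\<bar> < 2 ^ m * y" if "m \<ge> N" for m
      proof -
        have "\<bar>X \<omega>\<bar> < 2 ^ N * y" using N assms(2) by (simp add: field_simps)
        also have "\<dots> \<le> 2 ^ m * y" using assms(2) that by (intro mult_right_mono power_increasing) auto
        finally show ?thesis .
      qed
      then have "\<forall>\<^sub>F m in sequentially. (if \<bar>X \<omega>\<bar> > 2 ^ m * y then \<bar>X \<omega>\<bar> else 0) = (0::real)"
        unfolding eventually_sequentially by (intro exI[of _ N]) (use less_asym in fastforce)
      then show "(\<lambda>m. if \<bar>X \<omega>\<bar> > 2 ^ m * y then \<bar>X \<omega>\<bar> else 0) \<longlonglongrightarrow> (0::real)"
        by (rule tendsto_eventually)
    qed
    show "integrable M (\<lambda>\<omega>. \<bar>X \<omega>\<bar>)" using mean_zero[OF assms(1)] by auto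
  qed auto
  then show ?thesis by (simp add: upper_moment_def)
qed

lemma upper_moment_bound:
  assumes "\<alpha> > 1"
  obtains A x0 where "A > 0" "x0 > 0" "\<And>y. y \<ge> x0 \<Longrightarrow> upper_moment y \<le> A * y * tail_prob y"
proof -
  define \<beta> where "\<beta> = (1 + \<alpha>) / 2"
  have "\<beta> < \<alpha>" "1 < \<beta>" using assms by (auto simp: \<beta>_def)
  obtain x0 where "x0 > 0" and doubling: "\<And>y. y \<ge> x0 \<Longrightarrow> tail_prob (2 * y) \<le> 2 powr (-\<beta>) * tail_prob y"
    using tail_prob_doubling_lower[OF \<open>\<beta> < \<alpha>\<close>] by auto
  have r: "2 powr (1 - \<beta>) < 1" using \<open>1 < \<beta>\<close> by (simp add: powr_less_one)
  define K where "K = 2 / (1 - 2 powr (1 - \<beta>))"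
  have "K > 0" using r by (simp add: K_def)
  have K_fixpoint: "2 + K * 2 * 2 powr (-\<beta>) = K"
  proof -
    have "2 * 2 powr (-\<beta>) = 2 powr (1 - \<beta>)"
      by (simp add: powr_diff powr_minus divide_inverse)
    then have "2 + K * 2 * 2 powr (-\<beta>) = 2 + K * 2 powr (1 - \<beta>)" by (simp add: mult.assoc)
    also have "\<dots> = K"
      using r unfolding K_def by (simp add: field_simps less_imp_neq)
    finally show ?thesis .
  qed
  have telescope: "upper_moment y - upper_moment (2 ^ m * y) \<le> K * y * tail_prob y" if "y \<ge> x0" for m y
    using that
  proof (induction m arbitrary: y)
    case 0
    then show ?case using \<open>K > 0\<close> \<open>x0 > 0\<close> tail_prob_nonneg by simp
  next
    case (Suc m)
    have "upper_moment y - upper_moment (2 ^ Suc m * y)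
        = (upper_moment y - upper_moment (2 * y)) + (upper_moment (2 * y) - upper_moment (2 ^ m * (2 * y)))"
      by (simp add: mult_ac)
    also have "\<dots> \<le> 2 * y * tail_prob y + K * (2 * y) * tail_prob (2 * y)"
      using upper_moment_le_double[OF assms, of y] Suc.IH[of "2 * y"] Suc.prems \<open>x0 > 0\<close> by auto
    also have "\<dots> \<le> 2 * y * tail_prob y + K * (2 * y) * (2 powr (-\<beta>) * tail_prob y)"
      using doubling[OF Suc.prems] \<open>K > 0\<close> Suc.prems \<open>x0 > 0\<close> by (intro add_left_mono mult_left_mono) auto
    also have "\<dots> = (2 + K * 2 * 2 powr (-\<beta>)) * y * tail_prob y" by (simp add: algebra_simps)
    finally show ?case using K_fixpoint by simp
  qed
  have "upper_moment y \<le> K * y * tail_prob y" if "y \<ge> x0" for y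
  proof (rule LIMSEQ_le_const)
    show "(\<lambda>m. K * y * tail_prob y + upper_moment (2 ^ m * y)) \<longlonglongrightarrow> K * y * tail_prob y"
      using tendsto_add[OF tendsto_const upper_moment_dyadic_tendsto_0[OF assms, of y]] that \<open>x0 > 0\<close>
      by simp
    show "\<exists>N. \<forall>m\<ge>N. upper_moment y \<le> K * y * tail_prob y + upper_moment (2 ^ m * y)"
      using telescope[OF that] by (intro exI[of _ 0]) (auto simp: algebra_simps)
  qed
  with \<open>K > 0\<close> \<open>x0 > 0\<close> show ?thesis by (rule that)
qed

lemma tail_term_eq_tail_prob:
  assumes "c \<noteq> 0"
  shows "tail_term \<alpha> h c = tail_prob (1 / \<bar>c\<bar>)"
proof -
  have "(1 / \<bar>c\<bar>) powr (-\<alpha>) = \<bar>c\<bar> powr \<alpha>"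
    using assms by (simp add: powr_minus powr_divide)
  then show ?thesis
    using tail_eq[of "1 / \<bar>c\<bar>"] assms by (simp add: tail_term_def tail_prob_def)
qed

lemma tail_term_eq_prob: "tail_term \<alpha> h c = prob {\<omega> \<in> space M. \<bar>c * X \<omega>\<bar> > 1}"
proof (cases "c = 0")
  case False
  then have "{\<omega> \<in> space M. \<bar>c * X \<omega>\<bar> > 1} = {\<omega> \<in> space M. \<bar>X \<omega>\<bar> > 1 / \<bar>c\<bar>}"
    using abs_mult_le_1_iff[OF False] by (auto simp: not_le[symmetric])
  then show ?thesis using False by (simp add: tail_term_eq_tail_prob tail_prob_def)
qed (simp add: tail_term_def)

lemma tail_term_nonneg: "0 \<le> tail_term \<alpha> h c"
  by (simp add: tail_term_eq_prob)

lemma integral_truncated_square: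
  assumes "c \<noteq> 0"
  shows "(\<integral>\<omega>. (truncated c (X \<omega>))\<^sup>2 \<partial>M) = c\<^sup>2 * lower_moment 2 (1 / \<bar>c\<bar>)"
proof -
  have "(\<integral>\<omega>. (truncated c (X \<omega>))\<^sup>2 \<partial>M)
      = (\<integral>\<omega>. c\<^sup>2 * (if \<bar>X \<omega>\<bar> \<le> 1 / \<bar>c\<bar> then \<bar>X \<omega>\<bar> ^ 2 else 0) \<partial>M)"
    by (intro Bochner_Integration.integral_cong) (simp_all add: truncated_eq[OF assms] power_mult_distrib)
  then show ?thesis by (simp add: lower_moment_def)
qed

lemma abs_integral_truncated_le_lower_moment:
  assumes "c \<noteq> 0"
  shows "\<bar>\<integral>\<omega>. truncated c (X \<omega>) \<partial>M\<bar> \<le> \<bar>c\<bar> * lower_moment 1 (1 / \<bar>c\<bar>)"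
proof -
  have "\<bar>\<integral>\<omega>. truncated c (X \<omega>) \<partial>M\<bar> \<le> (\<integral>\<omega>. \<bar>truncated c (X \<omega>)\<bar> \<partial>M)"
    by (rule integral_abs_bound)
  also have "\<dots> = (\<integral>\<omega>. \<bar>c\<bar> * (if \<bar>X \<omega>\<bar> \<le> 1 / \<bar>c\<bar> then \<bar>X \<omega>\<bar> ^ 1 else 0) \<partial>M)"
    by (intro Bochner_Integration.integral_cong) (simp_all add: truncated_eq[OF assms] abs_mult)
  also have "\<dots> = \<bar>c\<bar> * lower_moment 1 (1 / \<bar>c\<bar>)"
    unfolding lower_moment_def by (rule integral_mult_right_zero)
  finally show ?thesis .
qed

text \<open>For \<open>\<alpha> > 1\<close> the mean is zero, so the truncated mean is minus the mean of the discarded part.\<close>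
lemma abs_integral_truncated_le_upper_moment:
  assumes "c \<noteq> 0" "\<alpha> > 1"
  shows "\<bar>\<integral>\<omega>. truncated c (X \<omega>) \<partial>M\<bar> \<le> \<bar>c\<bar> * upper_moment (1 / \<bar>c\<bar>)"
proof -
  define x where "x = 1 / \<bar>c\<bar>"
  define R where "R \<omega> = (if \<bar>X \<omega>\<bar> > x then X \<omega> else 0)" for \<omega>
  have "integrable M X" "expectation X = 0" using mean_zero[OF assms(2)] by auto
  have "integrable M R"
    unfolding R_def
  proof (rule Bochner_Integration.integrable_bound[where f=X])
    show "AE \<omega> in M. norm (if \<bar>X \<omega>\<bar> > x then X \<omega> else 0) \<le> norm (X \<omega>)"
      by (rule AE_I2) simp
  qed (use \<open>integrable M X\<close> in simp_all)
  have "(\<integral>\<omega>. truncated c (X \<omega>) \<partial>M) = (\<integral>\<omega>. c * X \<omega> - c * R \<omega> \<partial>M)"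
    by (intro Bochner_Integration.integral_cong) (auto simp: truncated_eq[OF assms(1)] x_def R_def)
  also have "\<dots> = - c * expectation R"
    using \<open>integrable M X\<close> \<open>integrable M R\<close> \<open>expectation X = 0\<close> by simp
  finally have "\<bar>\<integral>\<omega>. truncated c (X \<omega>) \<partial>M\<bar> = \<bar>c\<bar> * \<bar>expectation R\<bar>"
    by (simp add: abs_mult)
  also have "\<dots> \<le> \<bar>c\<bar> * (\<integral>\<omega>. \<bar>R \<omega>\<bar> \<partial>M)"
    by (intro mult_left_mono integral_abs_bound) auto
  also have "(\<integral>\<omega>. \<bar>R \<omega>\<bar> \<partial>M) = upper_moment x"
    unfolding upper_moment_def R_def by (intro Bochner_Integration.integral_cong) auto
  finally show ?thesis by (simp add: x_def)
qed

lemma integral_truncated_symmetric: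
  assumes "\<alpha> = 1"
  shows "(\<integral>\<omega>. truncated c (X \<omega>) \<partial>M) = 0"
proof -
  have "(\<integral>\<omega>. truncated c (X \<omega>) \<partial>M) = integral\<^sup>L (distr M borel X) (truncated c)"
    by (simp add: integral_distr)
  also have "\<dots> = integral\<^sup>L (distr M borel (\<lambda>\<omega>. - X \<omega>)) (truncated c)"
    using symmetric[OF assms] by simp
  also have "\<dots> = (\<integral>\<omega>. truncated c (- X \<omega>) \<partial>M)"
    by (simp add: integral_distr)
  also have "\<dots> = (\<integral>\<omega>. - truncated c (X \<omega>) \<partial>M)"
    by (intro Bochner_Integration.integral_cong) (auto simp: truncated_def)
  also have "\<dots> = - (\<integral>\<omega>. truncated c (X \<omega>) \<partial>M)"
    by simp
  finally show ?thesis by simp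
qed

lemma abs_integral_truncated_bound:
  obtains A x0 where "A > 0" "x0 > 0"
    "\<And>c. c \<noteq> 0 \<Longrightarrow> 1 / \<bar>c\<bar> \<ge> x0 \<Longrightarrow> \<bar>\<integral>\<omega>. truncated c (X \<omega>) \<partial>M\<bar> \<le> A * tail_prob (1 / \<bar>c\<bar>)"
proof (cases \<alpha> "1::real" rule: linorder_cases)
  case less
  then obtain A x0 where "A > 0" "x0 > 0" and A: "\<And>y. y \<ge> x0 \<Longrightarrow> lower_moment 1 y \<le> A * y * tail_prob y"
    using lower_moment_bound[of 1] by auto
  show ?thesis
  proof (rule that[OF \<open>A > 0\<close> \<open>x0 > 0\<close>])
    fix c :: real assume "c \<noteq> 0" "1 / \<bar>c\<bar> \<ge> x0"
    then have "\<bar>c\<bar> * lower_moment 1 (1 / \<bar>c\<bar>) \<le> A * tail_prob (1 / \<bar>c\<bar>)"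
      using A[of "1 / \<bar>c\<bar>"] mult_left_mono[OF A[of "1 / \<bar>c\<bar>"], of "\<bar>c\<bar>"] by simp
    then show "\<bar>\<integral>\<omega>. truncated c (X \<omega>) \<partial>M\<bar> \<le> A * tail_prob (1 / \<bar>c\<bar>)"
      using abs_integral_truncated_le_lower_moment[OF \<open>c \<noteq> 0\<close>] by linarith
  qed
next
  case equal
  then show ?thesis
    using that[of 1 1] by (simp add: integral_truncated_symmetric tail_prob_nonneg)
next
  case greater
  then obtain A x0 where "A > 0" "x0 > 0" and A: "\<And>y. y \<ge> x0 \<Longrightarrow> upper_moment y \<le> A * y * tail_prob y"
    using upper_moment_bound by auto
  show ?thesis
  proof (rule that[OF \<open>A > 0\<close> \<open>x0 > 0\<close>])
    fix c :: real assume "c \<noteq> 0" "1 / \<bar>c\<bar> \<ge> x0"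
    then have "\<bar>c\<bar> * upper_moment (1 / \<bar>c\<bar>) \<le> A * tail_prob (1 / \<bar>c\<bar>)"
      using mult_left_mono[OF A[of "1 / \<bar>c\<bar>"], of "\<bar>c\<bar>"] by simp
    then show "\<bar>\<integral>\<omega>. truncated c (X \<omega>) \<partial>M\<bar> \<le> A * tail_prob (1 / \<bar>c\<bar>)"
      using abs_integral_truncated_le_upper_moment[OF \<open>c \<noteq> 0\<close> greater] by linarith
  qed
qed

lemma truncated_moments_bound:
  obtains A \<gamma> where "A > 0" "\<gamma> > 0"
    "\<And>c. \<bar>c\<bar> \<le> \<gamma> \<Longrightarrow> (\<integral>\<omega>. (truncated c (X \<omega>))\<^sup>2 \<partial>M) \<le> A * tail_term \<alpha> h c"
    "\<And>c. \<bar>c\<bar> \<le> \<gamma> \<Longrightarrow> \<bar>\<integral>\<omega>. truncated c (X \<omega>) \<partial>M\<bar> \<le> A * tail_term \<alpha> h c"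
proof -
  obtain A2 x2 where "A2 > 0" "x2 > 0" and A2: "\<And>y. y \<ge> x2 \<Longrightarrow> lower_moment 2 y \<le> A2 * y\<^sup>2 * tail_prob y"
    using lower_moment_bound[of 2] alpha_less_2 by auto
  obtain A1 x1 where "A1 > 0" "x1 > 0" and A1: "\<And>c. c \<noteq> 0 \<Longrightarrow> 1 / \<bar>c\<bar> \<ge> x1
      \<Longrightarrow> \<bar>\<integral>\<omega>. truncated c (X \<omega>) \<partial>M\<bar> \<le> A1 * tail_prob (1 / \<bar>c\<bar>)"
    using abs_integral_truncated_bound by blast
  define A where "A = max A1 A2"
  define \<gamma> where "\<gamma> = 1 / max x1 x2"
  have large: "1 / \<bar>c\<bar> \<ge> max x1 x2" if "\<bar>c\<bar> \<le> \<gamma>" "c \<noteq> 0" for c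
  proof -
    have "max x1 x2 > 0" using \<open>x1 > 0\<close> by simp
    then have "\<bar>c\<bar> * max x1 x2 \<le> 1" using that(1) by (simp add: \<gamma>_def pos_le_divide_eq)
    then show ?thesis using that(2) by (metis mult.commute pos_le_divide_eq zero_less_abs_iff)
  qed
  show ?thesis
  proof (rule that)
    show "A > 0" "\<gamma> > 0" using \<open>A1 > 0\<close> \<open>x1 > 0\<close> by (auto simp: A_def \<gamma>_def)
  next
    fix c :: real assume c: "\<bar>c\<bar> \<le> \<gamma>"
    show "(\<integral>\<omega>. (truncated c (X \<omega>))\<^sup>2 \<partial>M) \<le> A * tail_term \<alpha> h c"
    proof (cases "c = 0")
      case False
      have "(\<integral>\<omega>. (truncated c (X \<omega>))\<^sup>2 \<partial>M) \<le> c\<^sup>2 * (A2 * (1 / \<bar>c\<bar>)\<^sup>2 * tail_prob (1 / \<bar>c\<bar>))"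
        unfolding integral_truncated_square[OF False]
        using A2 large[OF c False] by (intro mult_left_mono) auto
      also have "\<dots> = A2 * tail_prob (1 / \<bar>c\<bar>)"
        using False by (simp add: power_divide)
      also have "\<dots> \<le> A * tail_term \<alpha> h c"
        using False tail_prob_nonneg by (auto simp: A_def tail_term_eq_tail_prob intro!: mult_right_mono)
      finally show ?thesis .
    qed (simp add: truncated_def tail_term_def)
    show "\<bar>\<integral>\<omega>. truncated c (X \<omega>) \<partial>M\<bar> \<le> A * tail_term \<alpha> h c"
    proof (cases "c = 0")
      case False
      have "\<bar>\<integral>\<omega>. truncated c (X \<omega>) \<partial>M\<bar> \<le> A1 * tail_prob (1 / \<bar>c\<bar>)"
        using A1 large[OF c False] False by simp
      also have "\<dots> \<le> A * tail_term \<alpha> h c"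
        using False tail_prob_nonneg by (auto simp: A_def tail_term_eq_tail_prob intro!: mult_right_mono)
      finally show ?thesis .
    qed (simp add: truncated_def tail_term_def)
  qed
qed

lemma interval_prob_le_1_minus:
  assumes "L > 0"
  obtains q where "q > 0" "\<And>u. prob {\<omega> \<in> space M. u \<le> X \<omega> \<and> X \<omega> \<le> u + L} \<le> 1 - q"
proof -
  obtain x0 where "x0 > 0" and x0: "\<And>x. x \<ge> x0 \<Longrightarrow> tail_prob x \<le> 1/2"
    using tail_prob_eventually_le[of "1/2"] by auto
  define q where "q = min (1/2) (tail_prob (x0 + L))"
  have "q > 0" using tail_prob_pos[of "x0 + L"] \<open>x0 > 0\<close> assms by (simp add: q_def)
  have "prob {\<omega> \<in> space M. u \<le> X \<omega> \<and> X \<omega> \<le> u + L} \<le> 1 - q" for u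
  proof (cases "u > x0 \<or> u + L < - x0")
    case True
    have "prob {\<omega> \<in> space M. u \<le> X \<omega> \<and> X \<omega> \<le> u + L} \<le> tail_prob x0"
      unfolding tail_prob_def using True by (intro finite_measure_mono) auto
    then show ?thesis using x0[of x0] by (simp add: q_def)
  next
    case False
    have "prob {\<omega> \<in> space M. u \<le> X \<omega> \<and> X \<omega> \<le> u + L}
        \<le> prob (space M - {\<omega> \<in> space M. \<bar>X \<omega>\<bar> > x0 + L})"
      using False by (intro finite_measure_mono) auto
    also have "\<dots> = 1 - tail_prob (x0 + L)" unfolding tail_prob_def by (rule prob_compl) simp
    finally show ?thesis by (simp add: q_def)
  qed
  with \<open>q > 0\<close> show ?thesis by (rule that)
qed

lemma prob_abs_between:
  assumes "0 < a" "a \<le> b"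
  shows "prob {\<omega> \<in> space M. a < \<bar>X \<omega>\<bar> \<and> \<bar>X \<omega>\<bar> \<le> b} = tail_prob a - tail_prob b"
proof -
  have "{\<omega> \<in> space M. a < \<bar>X \<omega>\<bar> \<and> \<bar>X \<omega>\<bar> \<le> b}
      = {\<omega> \<in> space M. \<bar>X \<omega>\<bar> > a} - {\<omega> \<in> space M. \<bar>X \<omega>\<bar> > b}"
    by auto
  then show ?thesis
    unfolding tail_prob_def using assms by (simp add: finite_measure_Diff subset_eq)
qed

text \<open>Regular variation makes \<open>tail_prob\<close> nearly constant across a thin annulus
  \<open>(1 - \<delta>) m < \<bar>X\<bar> \<le> (1 + \<delta>) m\<close>, so the annulus carries little mass.\<close>
lemma annulus_prob_small:
  obtains \<delta> x0 where "0 < \<delta>" "\<delta> \<le> 1/2" "x0 > 0"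
    "\<And>T m. x0 \<le> T \<Longrightarrow> T \<le> m \<Longrightarrow>
      prob {\<omega> \<in> space M. (1 - \<delta>) * m < \<bar>X \<omega>\<bar> \<and> \<bar>X \<omega>\<bar> \<le> (1 + \<delta>) * m} \<le> tail_prob T / 16"
proof -
  have l1: "((\<lambda>d. ((1 + d) / (1 - d)) powr (-\<alpha>)) \<longlongrightarrow> 1) (at (0::real))"
    by (intro tendsto_eq_intros) (auto intro: tendsto_ident_at)
  have l2: "((\<lambda>d. (1 - d) powr (-\<alpha>)) \<longlongrightarrow> 1) (at (0::real))"
    by (intro tendsto_eq_intros) (auto intro: tendsto_ident_at)
  have "\<forall>\<^sub>F d in at 0. ((1 + d) / (1 - d)) powr (-\<alpha>) > 31/32"
    and "\<forall>\<^sub>F d in at 0. (1 - d) powr (-\<alpha>) < 2"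
    using order_tendstoD(1)[OF l1, of "31/32"] order_tendstoD(2)[OF l2, of 2] by simp_all
  from eventually_conj[OF this] obtain d0 where "d0 > 0" and d0: "\<And>d::real. d \<noteq> 0 \<Longrightarrow> \<bar>d\<bar> < d0 \<Longrightarrow>
      ((1 + d) / (1 - d)) powr (-\<alpha>) > 31/32 \<and> (1 - d) powr (-\<alpha>) < 2"
    unfolding eventually_at by (auto simp: dist_real_def)
  define \<delta> where "\<delta> = min (d0 / 2) (1 / 2)"
  have \<delta>: "0 < \<delta>" "\<delta> \<le> 1/2" using \<open>d0 > 0\<close> by (auto simp: \<delta>_def)
  then have ratios: "((1 + \<delta>) / (1 - \<delta>)) powr (-\<alpha>) > 31/32" "(1 - \<delta>) powr (-\<alpha>) < 2"
    using d0[of \<delta>] \<open>d0 > 0\<close> by (auto simp: \<delta>_def)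
  obtain xa where "xa > 0" and xa: "\<And>x. x \<ge> xa \<Longrightarrow> 31/32 * tail_prob x \<le> tail_prob ((1 + \<delta>) / (1 - \<delta>) * x)"
    using tail_prob_ratio_eventually_ge[of "(1 + \<delta>) / (1 - \<delta>)" "31/32"] ratios \<delta> by auto
  obtain xb where "xb > 0" and xb: "\<And>x. x \<ge> xb \<Longrightarrow> tail_prob ((1 - \<delta>) * x) \<le> 2 * tail_prob x"
    using tail_prob_ratio_eventually_le[of "1 - \<delta>" 2] ratios \<delta> by auto
  define x0 where "x0 = max (xa / (1 - \<delta>)) xb"
  show ?thesis
  proof (rule that[OF \<delta>])
    show "x0 > 0" using \<open>xb > 0\<close> by (simp add: x0_def)
  next
    fix T m assume T: "x0 \<le> T" "T \<le> m"
    have "xa \<le> (1 - \<delta>) * T"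
      using T \<delta> by (simp add: x0_def pos_divide_le_eq mult.commute)
    also have "\<dots> \<le> (1 - \<delta>) * m"
      using T \<delta> by (intro mult_left_mono) auto
    finally have "(1 - \<delta>) * m \<ge> xa" .
    moreover have "0 < (1 - \<delta>) * m"
      using T \<delta> \<open>xb > 0\<close> by (simp add: x0_def)
    ultimately have "31/32 * tail_prob ((1 - \<delta>) * m) \<le> tail_prob ((1 + \<delta>) * m)"
      using xa[of "(1 - \<delta>) * m"] \<delta> by simp
    moreover have "tail_prob ((1 - \<delta>) * m) \<le> tail_prob ((1 - \<delta>) * T)"
      using T \<delta> by (intro tail_prob_antimono mult_left_mono) auto
    moreover have "tail_prob ((1 - \<delta>) * T) \<le> 2 * tail_prob T"
      using xb T by (simp add: x0_def)
    moreover have "prob {\<omega> \<in> space M. (1 - \<delta>) * m < \<bar>X \<omega>\<bar> \<and> \<bar>X \<omega>\<bar> \<le> (1 + \<delta>) * m}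
        = tail_prob ((1 - \<delta>) * m) - tail_prob ((1 + \<delta>) * m)"
      using \<open>0 < (1 - \<delta>) * m\<close> \<delta>
      by (intro prob_abs_between) (auto simp: zero_less_mult_iff intro: mult_right_mono)
    ultimately show "prob {\<omega> \<in> space M. (1 - \<delta>) * m < \<bar>X \<omega>\<bar> \<and> \<bar>X \<omega>\<bar> \<le> (1 + \<delta>) * m}
        \<le> tail_prob T / 16"
      by linarith
  qed
qed

text \<open>An interval of length \<open>\<delta> T\<close> outside \<open>[-T, T]\<close> lies in one of two annuli around
  \<open>max u T\<close> and \<open>max (- u - \<delta> T) T\<close>.\<close>
lemma tail_concentration:
  obtains \<delta> x0 where "0 < \<delta>" "x0 > 0"
    "\<And>T u. T \<ge> x0 \<Longrightarrow> prob {\<omega> \<in> space M. u \<le> X \<omega> \<and> X \<omega> \<le> u + \<delta> * T \<and> \<bar>X \<omega>\<bar> > T} \<le> tail_prob T / 4"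
proof -
  obtain \<delta> x0 where \<delta>: "0 < \<delta>" "\<delta> \<le> 1/2" and "x0 > 0" and annulus: "\<And>T m. x0 \<le> T \<Longrightarrow> T \<le> m \<Longrightarrow>
      prob {\<omega> \<in> space M. (1 - \<delta>) * m < \<bar>X \<omega>\<bar> \<and> \<bar>X \<omega>\<bar> \<le> (1 + \<delta>) * m} \<le> tail_prob T / 16"
    using annulus_prob_small by blast
  define A where "A m = {\<omega> \<in> space M. (1 - \<delta>) * m < \<bar>X \<omega>\<bar> \<and> \<bar>X \<omega>\<bar> \<le> (1 + \<delta>) * m}" for m
  have bound: "prob {\<omega> \<in> space M. u \<le> X \<omega> \<and> X \<omega> \<le> u + \<delta> * T \<and> \<bar>X \<omega>\<bar> > T} \<le> tail_prob T / 4"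
    if T: "T \<ge> x0" for T u
  proof -
    define m1 where "m1 = max u T"
    define m2 where "m2 = max (- u - \<delta> * T) T"
    have "T > 0" using T \<open>x0 > 0\<close> by simp
    have m: "u \<le> m1" "T \<le> m1" "- u - \<delta> * T \<le> m2" "T \<le> m2"
      by (simp_all add: m1_def m2_def)
    then have "\<delta> * T \<le> \<delta> * m1" "\<delta> * T \<le> \<delta> * m2"
      using \<delta> by (simp_all add: mult_left_mono)
    have "\<omega> \<in> A m1 \<union> A m2"
      if \<omega>: "\<omega> \<in> space M" "u \<le> X \<omega>" "X \<omega> \<le> u + \<delta> * T" "\<bar>X \<omega>\<bar> > T" for \<omega>
    proof (cases "X \<omega> > 0")
      case True
      have "m1 \<le> X \<omega>" using \<omega> True by (simp add: m1_def)
      moreover have "X \<omega> \<le> (1 + \<delta>) * m1"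
        unfolding distrib_right mult_1_left using \<omega>(3) m \<open>\<delta> * T \<le> \<delta> * m1\<close> by linarith
      moreover have "(1 - \<delta>) * m1 < m1"
        using m \<delta> \<open>T > 0\<close> by (simp add: left_diff_distrib)
      ultimately show ?thesis using True \<omega>(1) by (auto simp: A_def)
    next
      case False
      have "m2 \<le> - X \<omega>" using \<omega> False by (simp add: m2_def)
      moreover have "- X \<omega> \<le> (1 + \<delta>) * m2"
        unfolding distrib_right mult_1_left using \<omega>(2) m \<open>\<delta> * T \<le> \<delta> * m2\<close> by linarith
      moreover have "(1 - \<delta>) * m2 < m2"
        using m \<delta> \<open>T > 0\<close> by (simp add: left_diff_distrib)
      ultimately show ?thesis using False \<omega>(1) by (auto simp: A_def)
    qed
    then have "prob {\<omega> \<in> space M. u \<le> X \<omega> \<and> X \<omega> \<le> u + \<delta> * T \<and> \<bar>X \<omega>\<bar> > T} \<le> prob (A m1 \<union> A m2)"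
      by (intro finite_measure_mono) (auto simp: A_def)
    also have "\<dots> \<le> prob (A m1) + prob (A m2)"
      by (intro measure_Un_le) (auto simp: A_def)
    also have "\<dots> \<le> tail_prob T / 16 + tail_prob T / 16"
      unfolding A_def using T by (intro add_mono annulus) (auto simp: m1_def m2_def)
    finally show ?thesis using tail_prob_nonneg[of T] by simp
  qed
  show ?thesis by (rule that[OF \<open>0 < \<delta>\<close> \<open>x0 > 0\<close> bound])
qed

lemma abs_le_of_tail_term_less:
  assumes "\<gamma> > 0" "tail_term \<alpha> h c < tail_prob (1 / \<gamma>)"
  shows "\<bar>c\<bar> \<le> \<gamma>"
proof (rule ccontr)
  assume "\<not> \<bar>c\<bar> \<le> \<gamma>"
  then have "c \<noteq> 0" "1 / \<bar>c\<bar> \<le> 1 / \<gamma>" using assms(1) by (auto simp: frac_le)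
  then show False
    using assms(2) tail_prob_antimono[of "1 / \<bar>c\<bar>" "1 / \<gamma>"] by (simp add: tail_term_eq_tail_prob)
qed

end

section \<open>Linear combinations of i.i.d. heavy-tailed variables\<close>

locale iid_heavy_tailed = heavy_tailed M "Y 1" \<alpha> h
  for M :: "'a measure" and Y :: "int \<Rightarrow> 'a \<Rightarrow> real" and \<alpha> :: real and h :: "real \<Rightarrow> real" +
  assumes indep_Y: "indep_vars (\<lambda>_. borel) Y UNIV"
    and identically_distributed: "\<And>j. distr M borel (Y j) = distr M borel (Y 1)"
begin

lemma Y_measurable[measurable]: "Y j \<in> borel_measurable M"
  using indep_Y unfolding indep_vars_def by auto

lemma integral_Y_eq:
  fixes f :: "real \<Rightarrow> real"
  assumes "f \<in> borel_measurable borel"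
  shows "(\<integral>\<omega>. f (Y j \<omega>) \<partial>M) = (\<integral>\<omega>. f (Y 1 \<omega>) \<partial>M)"
proof -
  have "(\<integral>\<omega>. f (Y j \<omega>) \<partial>M) = integral\<^sup>L (distr M borel (Y j)) f" for j
    using assms by (simp add: integral_distr)
  then show ?thesis using identically_distributed[of j] by metis
qed

lemma prob_Y_eq:
  assumes "B \<in> sets borel"
  shows "prob {\<omega> \<in> space M. Y j \<omega> \<in> B} = prob {\<omega> \<in> space M. Y 1 \<omega> \<in> B}"
proof -
  have "prob {\<omega> \<in> space M. Y j \<omega> \<in> B} = measure (distr M borel (Y j)) B" for j
    using assms by (subst measure_distr) (auto simp: vimage_def Int_def conj_commute)
  then show ?thesis using identically_distributed[of j] by metis
qed

lemma tail_term_eq_prob_Y: "tail_term \<alpha> h c = prob {\<omega> \<in> space M. \<bar>c * Y j \<omega>\<bar> > 1}"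
proof -
  have "prob {\<omega> \<in> space M. \<bar>c * Y j \<omega>\<bar> > 1} = prob {\<omega> \<in> space M. Y j \<omega> \<in> {y. \<bar>c * y\<bar> > 1}}"
    by simp
  also have "\<dots> = prob {\<omega> \<in> space M. Y 1 \<omega> \<in> {y. \<bar>c * y\<bar> > 1}}"
    by (intro prob_Y_eq) measurable
  finally show ?thesis by (simp add: tail_term_eq_prob)
qed

lemma indep_scaled_Y: "indep_vars (\<lambda>_. borel) (\<lambda>j \<omega>. c j * Y j \<omega>) UNIV"
  by (rule indep_vars_compose2[OF indep_Y, where Y="\<lambda>j y. c j * y"]) simp

lemma prob_truncated_sum_ge_le:
  assumes "finite I" "\<epsilon> > 0"
  shows "prob {\<omega> \<in> space M. \<bar>\<Sum>j\<in>I. truncated (c j) (Y j \<omega>)\<bar> \<ge> \<epsilon>}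
    \<le> (\<integral>\<omega>. (\<Sum>j\<in>I. truncated (c j) (Y j \<omega>))\<^sup>2 \<partial>M) / \<epsilon>\<^sup>2"
proof (rule second_moment_method)
  have "\<bar>\<Sum>j\<in>I. truncated (c j) (Y j \<omega>)\<bar> \<le> real (card I)" for \<omega>
  proof -
    have "\<bar>\<Sum>j\<in>I. truncated (c j) (Y j \<omega>)\<bar> \<le> (\<Sum>j\<in>I. \<bar>truncated (c j) (Y j \<omega>)\<bar>)"
      by (rule sum_abs)
    also have "\<dots> \<le> (\<Sum>j\<in>I. 1)" by (intro sum_mono) (simp add: abs_truncated_le_1)
    finally show ?thesis by simp
  qed
  then have "(\<Sum>j\<in>I. truncated (c j) (Y j \<omega>))\<^sup>2 \<le> (real (card I))\<^sup>2" for \<omega>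
    using power_mono[OF _ abs_ge_zero, of _ _ 2] by (metis power2_abs)
  then have "AE \<omega> in M. norm ((\<Sum>j\<in>I. truncated (c j) (Y j \<omega>))\<^sup>2) \<le> (real (card I))\<^sup>2"
    by (intro AE_I2) simp
  then show "integrable M (\<lambda>\<omega>. (\<Sum>j\<in>I. truncated (c j) (Y j \<omega>))\<^sup>2)"
    by (rule integrable_const_bound) measurable
qed (use assms in auto)

lemma integral_truncated_sum_square_le:
  assumes "finite I"
    and square: "\<And>j. j \<in> I \<Longrightarrow> (\<integral>\<omega>. (truncated (c j) (Y 1 \<omega>))\<^sup>2 \<partial>M) \<le> A * tail_term \<alpha> h (c j)"
    and mean: "\<And>j. j \<in> I \<Longrightarrow> \<bar>\<integral>\<omega>. truncated (c j) (Y 1 \<omega>) \<partial>M\<bar> \<le> A * tail_term \<alpha> h (c j)"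
  shows "(\<integral>\<omega>. (\<Sum>j\<in>I. truncated (c j) (Y j \<omega>))\<^sup>2 \<partial>M)
    \<le> A * (\<Sum>j\<in>I. tail_term \<alpha> h (c j)) + (A * (\<Sum>j\<in>I. tail_term \<alpha> h (c j)))\<^sup>2"
proof -
  define T where "T j \<omega> = truncated (c j) (Y j \<omega>)" for j \<omega>
  have "(\<Sum>j\<in>I. \<integral>\<omega>. (T j \<omega>)\<^sup>2 \<partial>M) \<le> (\<Sum>j\<in>I. A * tail_term \<alpha> h (c j))"
  proof (intro sum_mono)
    fix j assume "j \<in> I"
    have "(\<integral>\<omega>. (T j \<omega>)\<^sup>2 \<partial>M) = (\<integral>\<omega>. (truncated (c j) (Y 1 \<omega>))\<^sup>2 \<partial>M)"
      unfolding T_def by (rule integral_Y_eq[where f="\<lambda>y. (truncated (c j) y)\<^sup>2"]) measurable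
    then show "(\<integral>\<omega>. (T j \<omega>)\<^sup>2 \<partial>M) \<le> A * tail_term \<alpha> h (c j)"
      using square[OF \<open>j \<in> I\<close>] by simp
  qed
  moreover have "(\<Sum>j\<in>I. \<bar>\<integral>\<omega>. T j \<omega> \<partial>M\<bar>) \<le> (\<Sum>j\<in>I. A * tail_term \<alpha> h (c j))"
  proof (intro sum_mono)
    fix j assume "j \<in> I"
    have "(\<integral>\<omega>. T j \<omega> \<partial>M) = (\<integral>\<omega>. truncated (c j) (Y 1 \<omega>) \<partial>M)"
      unfolding T_def by (rule integral_Y_eq) measurable
    then show "\<bar>\<integral>\<omega>. T j \<omega> \<partial>M\<bar> \<le> A * tail_term \<alpha> h (c j)"
      using mean[OF \<open>j \<in> I\<close>] by simp
  qed
  moreover have "0 \<le> (\<Sum>j\<in>I. \<bar>\<integral>\<omega>. T j \<omega> \<partial>M\<bar>)" by (intro sum_nonneg) simp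
  moreover have "indep_vars (\<lambda>_. borel) T I"
    unfolding T_def by (intro indep_vars_compose2[OF indep_vars_subset[OF indep_Y]]) auto
  then have "(\<integral>\<omega>. (\<Sum>j\<in>I. T j \<omega>)\<^sup>2 \<partial>M)
      \<le> (\<Sum>j\<in>I. \<integral>\<omega>. (T j \<omega>)\<^sup>2 \<partial>M) + (\<Sum>j\<in>I. \<bar>\<integral>\<omega>. T j \<omega> \<partial>M\<bar>)\<^sup>2"
    using \<open>finite I\<close> by (rule integral_square_sum_indep_le[where K=1]) (simp add: T_def abs_truncated_le_1)
  ultimately show ?thesis
    unfolding T_def sum_distrib_left[symmetric] by (smt (verit) power_mono)
qed

text \<open>Truncating each \<open>c j Y j\<close> at level \<open>1\<close> costs the probability \<open>\<Sum> tail_term\<close>; the truncated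
  sum is then controlled by Chebyshev's inequality and the moment bounds.\<close>
lemma prob_partial_sum_gt_le:
  obtains A \<gamma> where "A > 0" "\<gamma> > 0"
    "\<And>c I \<epsilon>. finite I \<Longrightarrow> \<epsilon> > 0 \<Longrightarrow> (\<And>j. j \<in> I \<Longrightarrow> \<bar>c j\<bar> \<le> \<gamma>) \<Longrightarrow>
      prob {\<omega> \<in> space M. \<bar>\<Sum>j\<in>I. c j * Y j \<omega>\<bar> > \<epsilon>}
        \<le> (\<Sum>j\<in>I. tail_term \<alpha> h (c j))
          + (A * (\<Sum>j\<in>I. tail_term \<alpha> h (c j)) + (A * (\<Sum>j\<in>I. tail_term \<alpha> h (c j)))\<^sup>2) / \<epsilon>\<^sup>2"
proof -
  obtain A \<gamma> where "A > 0" "\<gamma> > 0"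
    and square: "\<And>c. \<bar>c\<bar> \<le> \<gamma> \<Longrightarrow> (\<integral>\<omega>. (truncated c (Y 1 \<omega>))\<^sup>2 \<partial>M) \<le> A * tail_term \<alpha> h c"
    and mean: "\<And>c. \<bar>c\<bar> \<le> \<gamma> \<Longrightarrow> \<bar>\<integral>\<omega>. truncated c (Y 1 \<omega>) \<partial>M\<bar> \<le> A * tail_term \<alpha> h c"
    using truncated_moments_bound by blast
  have bound: "prob {\<omega> \<in> space M. \<bar>\<Sum>j\<in>I. c j * Y j \<omega>\<bar> > \<epsilon>} \<le> s + (A * s + (A * s)\<^sup>2) / \<epsilon>\<^sup>2"
    if I: "finite I" and "\<epsilon> > 0" and small: "\<And>j. j \<in> I \<Longrightarrow> \<bar>c j\<bar> \<le> \<gamma>"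
      and s_def: "s = (\<Sum>j\<in>I. tail_term \<alpha> h (c j))" for c I \<epsilon> s
  proof -
    define T where "T j \<omega> = truncated (c j) (Y j \<omega>)" for j \<omega>
    have [measurable]: "T j \<in> borel_measurable M" for j unfolding T_def by measurable
    have "{\<omega> \<in> space M. \<bar>\<Sum>j\<in>I. c j * Y j \<omega>\<bar> > \<epsilon>}
        \<subseteq> (\<Union>j\<in>I. {\<omega> \<in> space M. \<bar>c j * Y j \<omega>\<bar> > 1}) \<union> {\<omega> \<in> space M. \<bar>\<Sum>j\<in>I. T j \<omega>\<bar> \<ge> \<epsilon>}"
    proof (intro subsetI)
      fix \<omega> assume \<omega>: "\<omega> \<in> {\<omega> \<in> space M. \<bar>\<Sum>j\<in>I. c j * Y j \<omega>\<bar> > \<epsilon>}"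
      show "\<omega> \<in> (\<Union>j\<in>I. {\<omega> \<in> space M. \<bar>c j * Y j \<omega>\<bar> > 1}) \<union> {\<omega> \<in> space M. \<bar>\<Sum>j\<in>I. T j \<omega>\<bar> \<ge> \<epsilon>}"
      proof (cases "\<exists>j\<in>I. \<bar>c j * Y j \<omega>\<bar> > 1")
        case False
        then have "(\<Sum>j\<in>I. T j \<omega>) = (\<Sum>j\<in>I. c j * Y j \<omega>)"
          by (intro sum.cong) (auto simp: T_def truncated_def)
        then show ?thesis using \<omega> by auto
      qed (use \<omega> in auto)
    qed
    then have "prob {\<omega> \<in> space M. \<bar>\<Sum>j\<in>I. c j * Y j \<omega>\<bar> > \<epsilon>}
        \<le> prob ((\<Union>j\<in>I. {\<omega> \<in> space M. \<bar>c j * Y j \<omega>\<bar> > 1}) \<union> {\<omega> \<in> space M. \<bar>\<Sum>j\<in>I. T j \<omega>\<bar> \<ge> \<epsilon>})"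
      using I by (intro finite_measure_mono) auto
    also have "\<dots> \<le> prob (\<Union>j\<in>I. {\<omega> \<in> space M. \<bar>c j * Y j \<omega>\<bar> > 1}) + prob {\<omega> \<in> space M. \<bar>\<Sum>j\<in>I. T j \<omega>\<bar> \<ge> \<epsilon>}"
      using I by (intro measure_Un_le) auto
    also have "prob (\<Union>j\<in>I. {\<omega> \<in> space M. \<bar>c j * Y j \<omega>\<bar> > 1})
        \<le> (\<Sum>j\<in>I. prob {\<omega> \<in> space M. \<bar>c j * Y j \<omega>\<bar> > 1})"
      using I by (intro finite_measure_subadditive_finite) auto
    also have "\<dots> = s"
      unfolding s_def by (intro sum.cong refl) (rule tail_term_eq_prob_Y[symmetric])
    also have "prob {\<omega> \<in> space M. \<bar>\<Sum>j\<in>I. T j \<omega>\<bar> \<ge> \<epsilon>} \<le> (\<integral>\<omega>. (\<Sum>j\<in>I. T j \<omega>)\<^sup>2 \<partial>M) / \<epsilon>\<^sup>2"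
      unfolding T_def using I \<open>\<epsilon> > 0\<close> by (rule prob_truncated_sum_ge_le)
    also have "(\<integral>\<omega>. (\<Sum>j\<in>I. T j \<omega>)\<^sup>2 \<partial>M) \<le> A * s + (A * s)\<^sup>2"
      unfolding T_def s_def using I square mean small by (intro integral_truncated_sum_square_le) auto
    finally show ?thesis using \<open>\<epsilon> > 0\<close> by (simp add: divide_right_mono)
  qed
  show ?thesis by (rule that[OF \<open>A > 0\<close> \<open>\<gamma> > 0\<close> bound[OF _ _ _ refl]])
qed

lemma tendsto_zero_in_prob_if_tail_sums_tendsto:
  fixes c :: "nat \<Rightarrow> int \<Rightarrow> real" and V :: "nat \<Rightarrow> 'a \<Rightarrow> real"
  assumes summable: "\<And>n. (\<lambda>j. tail_term \<alpha> h (c n j)) summable_on UNIV"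
    and V_measurable[measurable]: "\<And>n. V n \<in> borel_measurable M"
    and V_lim: "\<And>n. AE \<omega> in M. (\<lambda>N. \<Sum>j\<in>{- int N..int N}. c n j * Y j \<omega>) \<longlonglongrightarrow> V n \<omega>"
    and tail_sums: "(\<lambda>n. \<Sum>\<^sub>\<infinity>j. tail_term \<alpha> h (c n j)) \<longlonglongrightarrow> 0"
  shows "tendsto_zero_in_prob V"
  unfolding tendsto_zero_in_prob_def
proof (intro allI impI)
  fix \<epsilon> :: real assume "\<epsilon> > 0"
  obtain A \<gamma> where "A > 0" "\<gamma> > 0" and partial_bound: "\<And>c I \<epsilon>. finite I \<Longrightarrow> \<epsilon> > 0 \<Longrightarrow>
      (\<And>j. j \<in> I \<Longrightarrow> \<bar>c j\<bar> \<le> \<gamma>) \<Longrightarrow> prob {\<omega> \<in> space M. \<bar>\<Sum>j\<in>I. c j * Y j \<omega>\<bar> > \<epsilon>}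
        \<le> (\<Sum>j\<in>I. tail_term \<alpha> h (c j))
          + (A * (\<Sum>j\<in>I. tail_term \<alpha> h (c j)) + (A * (\<Sum>j\<in>I. tail_term \<alpha> h (c j)))\<^sup>2) / \<epsilon>\<^sup>2"
    using prob_partial_sum_gt_le by blast
  define S where "S n = (\<Sum>\<^sub>\<infinity>j. tail_term \<alpha> h (c n j))" for n
  define B where "B s = s + (A * s + (A * s)\<^sup>2) / (\<epsilon> / 2)\<^sup>2" for s
  have B_mono: "B s \<le> B t" if "0 \<le> s" "s \<le> t" for s t
    unfolding B_def using that \<open>A > 0\<close>
    by (intro add_mono divide_right_mono power_mono mult_left_mono) auto
  have "prob {\<omega> \<in> space M. \<bar>V n \<omega>\<bar> > \<epsilon>} \<le> B (S n)" if "S n < tail_prob (1 / \<gamma>)" for n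
  proof -
    have finite_le: "(\<Sum>j\<in>Q. tail_term \<alpha> h (c n j)) \<le> S n" if "finite Q" for Q
      unfolding S_def using summable that tail_term_nonneg by (intro finite_sum_le_infsum) auto
    have "\<bar>c n j\<bar> \<le> \<gamma>" for j
      using finite_le[of "{j}"] \<open>S n < tail_prob (1 / \<gamma>)\<close> \<open>\<gamma> > 0\<close>
      by (intro abs_le_of_tail_term_less) auto
    then have "prob {\<omega> \<in> space M. \<bar>\<Sum>j\<in>{- int N..int N}. c n j * Y j \<omega>\<bar> > \<epsilon> / 2} \<le> B (S n)" for N
      using partial_bound[of "{- int N..int N}" "\<epsilon> / 2" "c n"] \<open>\<epsilon> > 0\<close>
        B_mono[OF sum_nonneg[OF tail_term_nonneg] finite_le[of "{- int N..int N}"]]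
      by (simp add: B_def)
    then have "prob {\<omega> \<in> space M. \<bar>V n \<omega>\<bar> > \<epsilon> / 2 + \<epsilon> / 2} \<le> B (S n)"
      using \<open>\<epsilon> > 0\<close> by (intro prob_abs_gt_le_of_AE_tendsto[OF _ _ V_lim]) auto
    then show ?thesis by simp
  qed
  moreover have "\<forall>\<^sub>F n in sequentially. S n < tail_prob (1 / \<gamma>)"
    using order_tendstoD(2)[OF tail_sums tail_prob_pos] \<open>\<gamma> > 0\<close> by (simp add: S_def)
  ultimately have upper: "\<forall>\<^sub>F n in sequentially. prob {\<omega> \<in> space M. \<bar>V n \<omega>\<bar> > \<epsilon>} \<le> B (S n)"
    by (auto elim: eventually_mono)
  have "(\<lambda>n. B (S n)) \<longlonglongrightarrow> B 0"
    unfolding B_def S_def using tail_sums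
    by (intro tendsto_intros) (use \<open>\<epsilon> > 0\<close> in simp_all)
  then have "(\<lambda>n. B (S n)) \<longlonglongrightarrow> 0" by (simp add: B_def)
  then show "(\<lambda>n. prob {\<omega> \<in> space M. \<bar>V n \<omega>\<bar> > \<epsilon>}) \<longlonglongrightarrow> 0"
    by (rule tendsto_sandwich[OF always_eventually[OF allI[OF measure_nonneg]] upper tendsto_const])
qed

lemma prob_partial_sum_near_le:
  assumes "finite I" "j \<in> I" "B \<in> sets borel"
    and bound: "\<And>r. prob {\<omega> \<in> space M. \<bar>c j * Y j \<omega> + r\<bar> \<le> e \<and> c j * Y j \<omega> \<in> B} \<le> b"
  shows "prob {\<omega> \<in> space M. \<bar>\<Sum>i\<in>I. c i * Y i \<omega>\<bar> \<le> e \<and> c j * Y j \<omega> \<in> B} \<le> b"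
proof -
  have "indep_var borel (\<lambda>\<omega>. c j * Y j \<omega>) borel (\<lambda>\<omega>. \<Sum>i\<in>I - {j}. c i * Y i \<omega>)"
    using assms(1) by (intro indep_vars_sum indep_vars_subset[OF indep_scaled_Y]) auto
  then have "prob {\<omega> \<in> space M. \<bar>c j * Y j \<omega> + (\<Sum>i\<in>I - {j}. c i * Y i \<omega>)\<bar> \<le> e \<and> c j * Y j \<omega> \<in> B} \<le> b"
    using assms(3) bound by (rule prob_indep_shift_le)
  moreover have "(\<Sum>i\<in>I. c i * Y i \<omega>) = c j * Y j \<omega> + (\<Sum>i\<in>I - {j}. c i * Y i \<omega>)" for \<omega>
    using assms(1,2) by (simp add: sum.remove)
  ultimately show ?thesis by simp
qed

lemma prob_shifted_le:
  assumes interval: "\<And>u. prob {\<omega> \<in> space M. u \<le> Y 1 \<omega> \<and> Y 1 \<omega> \<le> u + L} \<le> 1 - q"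
    and "c \<noteq> 0" "2 * e / \<bar>c\<bar> \<le> L"
  shows "prob {\<omega> \<in> space M. \<bar>c * Y j \<omega> + r\<bar> \<le> e \<and> c * Y j \<omega> \<in> UNIV} \<le> 1 - q"
proof -
  obtain u where u: "\<And>y. \<bar>c * y + r\<bar> \<le> e \<longleftrightarrow> u \<le> y \<and> y \<le> u + 2 * e / \<bar>c\<bar>"
    using abs_mult_add_le_iff_interval[OF \<open>c \<noteq> 0\<close>] by blast
  have "prob {\<omega> \<in> space M. \<bar>c * Y j \<omega> + r\<bar> \<le> e \<and> c * Y j \<omega> \<in> UNIV}
      \<le> prob {\<omega> \<in> space M. Y j \<omega> \<in> {u..u + L}}"
    using u assms(3) by (intro finite_measure_mono) force+
  also have "\<dots> = prob {\<omega> \<in> space M. Y 1 \<omega> \<in> {u..u + L}}"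
    by (rule prob_Y_eq) simp
  also have "\<dots> \<le> 1 - q" using interval by simp
  finally show ?thesis .
qed

lemma prob_shifted_large_le:
  assumes concentration: "\<And>T u. T \<ge> x0 \<Longrightarrow>
      prob {\<omega> \<in> space M. u \<le> Y 1 \<omega> \<and> Y 1 \<omega> \<le> u + \<delta> * T \<and> \<bar>Y 1 \<omega>\<bar> > T} \<le> tail_prob T / 4"
    and "c \<noteq> 0" "1 / \<bar>c\<bar> \<ge> x0"
  shows "prob {\<omega> \<in> space M. \<bar>c * Y j \<omega> + r\<bar> \<le> \<delta> / 2 \<and> c * Y j \<omega> \<in> {x. \<bar>x\<bar> > 1}}
    \<le> tail_term \<alpha> h c / 4"
proof -
  define T where "T = 1 / \<bar>c\<bar>"
  obtain u where u: "\<And>y. \<bar>c * y + r\<bar> \<le> \<delta> / 2 \<longleftrightarrow> u \<le> y \<and> y \<le> u + 2 * (\<delta> / 2) / \<bar>c\<bar>"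
    using abs_mult_add_le_iff_interval[OF \<open>c \<noteq> 0\<close>] by blast
  define B where "B = {y. u \<le> y \<and> y \<le> u + \<delta> * T \<and> \<bar>y\<bar> > T}"
  have "B \<in> sets borel" unfolding B_def by measurable
  have "{\<omega> \<in> space M. \<bar>c * Y j \<omega> + r\<bar> \<le> \<delta> / 2 \<and> c * Y j \<omega> \<in> {x. \<bar>x\<bar> > 1}}
      = {\<omega> \<in> space M. Y j \<omega> \<in> B}"
    using u abs_mult_le_1_iff[OF \<open>c \<noteq> 0\<close>] by (auto simp: B_def T_def not_le[symmetric])
  also have "prob \<dots> = prob {\<omega> \<in> space M. u \<le> Y 1 \<omega> \<and> Y 1 \<omega> \<le> u + \<delta> * T \<and> \<bar>Y 1 \<omega>\<bar> > T}"
    using prob_Y_eq[OF \<open>B \<in> sets borel\<close>] by (simp add: B_def)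
  also have "\<dots> \<le> tail_prob T / 4"
    using assms(3) by (intro concentration) (simp add: T_def)
  finally show ?thesis using \<open>c \<noteq> 0\<close> by (simp add: tail_term_eq_tail_prob T_def)
qed

lemma one_minus_exp_tail_sum_le:
  assumes "finite I" "J \<subseteq> I"
    and near: "\<And>j. j \<in> J \<Longrightarrow>
      prob {\<omega> \<in> space M. \<bar>\<Sum>i\<in>I. c i * Y i \<omega>\<bar> \<le> e \<and> \<bar>c j * Y j \<omega>\<bar> > 1} \<le> tail_term \<alpha> h (c j) / 4"
  shows "1 - exp (- (\<Sum>j\<in>J. tail_term \<alpha> h (c j)))
    \<le> prob {\<omega> \<in> space M. \<bar>\<Sum>i\<in>I. c i * Y i \<omega>\<bar> > e} + (\<Sum>j\<in>J. tail_term \<alpha> h (c j)) / 4"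
proof -
  have "finite J" using finite_subset[OF assms(2,1)] .
  define E where "E j = {\<omega> \<in> space M. \<bar>\<Sum>i\<in>I. c i * Y i \<omega>\<bar> \<le> e \<and> \<bar>c j * Y j \<omega>\<bar> > 1}" for j
  have "(\<Sum>j\<in>J. tail_term \<alpha> h (c j)) = (\<Sum>j\<in>J. prob {\<omega> \<in> space M. c j * Y j \<omega> \<notin> {x. \<bar>x\<bar> \<le> 1}})"
    by (intro sum.cong refl) (simp add: tail_term_eq_prob_Y not_le)
  then have "1 - exp (- (\<Sum>j\<in>J. tail_term \<alpha> h (c j)))
      \<le> prob {\<omega> \<in> space M. \<exists>j\<in>J. c j * Y j \<omega> \<notin> {x. \<bar>x\<bar> \<le> 1}}"
    using prob_exists_not_in_ge_indep[OF indep_scaled_Y \<open>finite J\<close>, of "{x. \<bar>x\<bar> \<le> 1}"] by simp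
  also have "\<dots> \<le> prob ({\<omega> \<in> space M. \<bar>\<Sum>i\<in>I. c i * Y i \<omega>\<bar> > e} \<union> (\<Union>j\<in>J. E j))"
    using \<open>finite J\<close> by (intro finite_measure_mono) (auto simp: E_def)
  also have "\<dots> \<le> prob {\<omega> \<in> space M. \<bar>\<Sum>i\<in>I. c i * Y i \<omega>\<bar> > e} + prob (\<Union>j\<in>J. E j)"
    using \<open>finite J\<close> by (intro measure_Un_le) (auto simp: E_def)
  also have "prob (\<Union>j\<in>J. E j) \<le> (\<Sum>j\<in>J. prob (E j))"
    using \<open>finite J\<close> by (intro finite_measure_subadditive_finite) (auto simp: E_def)
  also have "\<dots> \<le> (\<Sum>j\<in>J. tail_term \<alpha> h (c j) / 4)"
    using near by (intro sum_mono) (simp add: E_def)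
  finally show ?thesis by (simp add: sum_divide_distrib)
qed

text \<open>If the partial sum is rarely large, no single coefficient can be large (a large \<open>c j Y j\<close>
  is not confined to a short interval), and every event \<open>\<bar>c j Y j\<bar> > 1\<close> mostly forces the sum to
  be large too, by concentration of the tail of \<open>Y 1\<close>.\<close>
lemma tail_sum_le_prob_partial_sum_gt:
  obtains e \<rho> where "e > 0" "\<rho> > 0"
    "\<And>c I. finite I \<Longrightarrow> prob {\<omega> \<in> space M. \<bar>\<Sum>j\<in>I. c j * Y j \<omega>\<bar> > e} < \<rho> \<Longrightarrow>
      (\<Sum>j\<in>I. tail_term \<alpha> h (c j)) \<le> 4 * prob {\<omega> \<in> space M. \<bar>\<Sum>j\<in>I. c j * Y j \<omega>\<bar> > e}"
proof -
  obtain \<delta> x0 where "0 < \<delta>" "x0 > 0" and concentration: "\<And>T u. T \<ge> x0 \<Longrightarrow>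
      prob {\<omega> \<in> space M. u \<le> Y 1 \<omega> \<and> Y 1 \<omega> \<le> u + \<delta> * T \<and> \<bar>Y 1 \<omega>\<bar> > T} \<le> tail_prob T / 4"
    using tail_concentration by blast
  obtain x2 where "x2 > 0" and half: "\<And>x. x \<ge> x2 \<Longrightarrow> tail_prob x \<le> 1/2"
    using tail_prob_eventually_le[of "1/2"] by auto
  define x1 where "x1 = max x0 x2"
  have "x1 > 0" "tail_prob x1 \<le> 1/2" using \<open>x0 > 0\<close> half by (auto simp: x1_def)
  obtain q where "q > 0" and interval: "\<And>u. prob {\<omega> \<in> space M. u \<le> Y 1 \<omega> \<and> Y 1 \<omega> \<le> u + \<delta> * x1} \<le> 1 - q"
    using interval_prob_le_1_minus[of "\<delta> * x1"] \<open>0 < \<delta>\<close> \<open>x1 > 0\<close> by auto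
  have bound: "(\<Sum>j\<in>I. tail_term \<alpha> h (c j)) \<le> 4 * \<pi>"
    if "finite I" and \<pi>_def: "\<pi> = prob {\<omega> \<in> space M. \<bar>\<Sum>j\<in>I. c j * Y j \<omega>\<bar> > \<delta> / 2}"
      and "\<pi> < min q (1/8)" for c I \<pi>
  proof -
    have not_small: "prob {\<omega> \<in> space M. \<bar>\<Sum>i\<in>I. c i * Y i \<omega>\<bar> \<le> \<delta> / 2 \<and> c j * Y j \<omega> \<in> UNIV} = 1 - \<pi>"
      for j unfolding \<pi>_def by (subst prob_compl[symmetric]) (auto intro!: arg_cong[where f=prob])
    have large: "x1 \<le> 1 / \<bar>c j\<bar>" if "j \<in> I" "c j \<noteq> 0" for j
    proof (rule ccontr)
      assume "\<not> x1 \<le> 1 / \<bar>c j\<bar>"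
      then have "\<delta> * (1 / \<bar>c j\<bar>) \<le> \<delta> * x1"
        using \<open>0 < \<delta>\<close> by (intro mult_left_mono) auto
      then have "2 * (\<delta> / 2) / \<bar>c j\<bar> \<le> \<delta> * x1"
        by simp
      then have "prob {\<omega> \<in> space M. \<bar>\<Sum>i\<in>I. c i * Y i \<omega>\<bar> \<le> \<delta> / 2 \<and> c j * Y j \<omega> \<in> UNIV} \<le> 1 - q"
        using that \<open>finite I\<close> by (intro prob_partial_sum_near_le prob_shifted_le[OF interval]) auto
      moreover have "\<pi> < q" using \<open>\<pi> < min q (1/8)\<close> by simp
      ultimately show False using not_small[of j] by linarith
    qed
    have tail_term_le_half: "0 \<le> tail_term \<alpha> h (c j) \<and> tail_term \<alpha> h (c j) \<le> 1/2" if "j \<in> I" for j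
    proof (cases "c j = 0")
      case False
      then show ?thesis
        using tail_prob_antimono[OF large[OF that False]] \<open>tail_prob x1 \<le> 1/2\<close>
        by (simp add: tail_term_eq_tail_prob tail_prob_nonneg)
    qed (simp add: tail_term_def)
    have near: "prob {\<omega> \<in> space M. \<bar>\<Sum>i\<in>I. c i * Y i \<omega>\<bar> \<le> \<delta> / 2 \<and> \<bar>c j * Y j \<omega>\<bar> > 1}
        \<le> tail_term \<alpha> h (c j) / 4" if "j \<in> I" for j
    proof (cases "c j = 0")
      case False
      have "prob {\<omega> \<in> space M. \<bar>\<Sum>i\<in>I. c i * Y i \<omega>\<bar> \<le> \<delta> / 2 \<and> c j * Y j \<omega> \<in> {x. \<bar>x\<bar> > 1}}
          \<le> tail_term \<alpha> h (c j) / 4"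
        using \<open>finite I\<close> that large[OF that False] \<open>x1 > 0\<close>
        by (intro prob_partial_sum_near_le prob_shifted_large_le[OF concentration] False) (auto simp: x1_def)
      then show ?thesis by simp
    qed (simp add: tail_term_def)
    show ?thesis
    proof (rule sum_le_of_subset_exp_bounds[OF \<open>finite I\<close> tail_term_le_half])
      show "0 \<le> \<pi>" by (simp add: \<pi>_def)
      show "\<pi> < 1/8" using \<open>\<pi> < min q (1/8)\<close> by simp
      show "1 - exp (- (\<Sum>j\<in>J. tail_term \<alpha> h (c j))) \<le> \<pi> + (\<Sum>j\<in>J. tail_term \<alpha> h (c j)) / 4"
        if "J \<subseteq> I" for J
        unfolding \<pi>_def using \<open>finite I\<close> that near by (intro one_minus_exp_tail_sum_le) auto
    qed
  qed
  have "\<delta> / 2 > 0" "min q (1/8) > 0" using \<open>0 < \<delta>\<close> \<open>q > 0\<close> by auto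
  then show ?thesis by (rule that[OF _ _ bound[OF _ refl]])
qed

lemma tail_sums_tendsto_if_tendsto_zero_in_prob:
  fixes c :: "nat \<Rightarrow> int \<Rightarrow> real" and V :: "nat \<Rightarrow> 'a \<Rightarrow> real"
  assumes summable: "\<And>n. (\<lambda>j. tail_term \<alpha> h (c n j)) summable_on UNIV"
    and V_measurable[measurable]: "\<And>n. V n \<in> borel_measurable M"
    and V_lim: "\<And>n. AE \<omega> in M. (\<lambda>N. \<Sum>j\<in>{- int N..int N}. c n j * Y j \<omega>) \<longlonglongrightarrow> V n \<omega>"
    and V_tendsto: "tendsto_zero_in_prob V"
  shows "(\<lambda>n. \<Sum>\<^sub>\<infinity>j. tail_term \<alpha> h (c n j)) \<longlonglongrightarrow> 0"
proof (rule order_tendstoI)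
  fix a :: real assume "a < 0"
  moreover have "0 \<le> (\<Sum>\<^sub>\<infinity>j. tail_term \<alpha> h (c n j))" for n
    by (intro infsum_nonneg tail_term_nonneg)
  ultimately show "\<forall>\<^sub>F n in sequentially. a < (\<Sum>\<^sub>\<infinity>j. tail_term \<alpha> h (c n j))"
    by (intro always_eventually allI) (rule less_le_trans)
next
  fix \<epsilon> :: real assume "\<epsilon> > 0"
  obtain e \<rho> where "e > 0" "\<rho> > 0" and bound: "\<And>c I. finite I \<Longrightarrow>
      prob {\<omega> \<in> space M. \<bar>\<Sum>j\<in>I. c j * Y j \<omega>\<bar> > e} < \<rho> \<Longrightarrow>
      (\<Sum>j\<in>I. tail_term \<alpha> h (c j)) \<le> 4 * prob {\<omega> \<in> space M. \<bar>\<Sum>j\<in>I. c j * Y j \<omega>\<bar> > e}"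
    using tail_sum_le_prob_partial_sum_gt by blast
  define \<rho>' where "\<rho>' = min \<rho> (\<epsilon> / 8)"
  have "\<rho>' > 0" using \<open>\<rho> > 0\<close> \<open>\<epsilon> > 0\<close> by (simp add: \<rho>'_def)
  have "(\<lambda>n. prob {\<omega> \<in> space M. \<bar>V n \<omega>\<bar> > e / 2}) \<longlonglongrightarrow> 0"
    using V_tendsto \<open>e > 0\<close> unfolding tendsto_zero_in_prob_def by (simp only: half_gt_zero)
  from order_tendstoD(2)[OF this \<open>\<rho>' > 0\<close>]
  show "\<forall>\<^sub>F n in sequentially. (\<Sum>\<^sub>\<infinity>j. tail_term \<alpha> h (c n j)) < \<epsilon>"
  proof eventually_elim
    case (elim n)
    have "\<forall>\<^sub>F N in sequentially.
        prob {\<omega> \<in> space M. \<bar>\<Sum>j\<in>{- int N..int N}. c n j * Y j \<omega>\<bar> > e / 2 + e / 2} < \<rho>'"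
      using \<open>e > 0\<close> elim by (intro eventually_prob_abs_gt_less_of_AE_tendsto[OF _ _ V_lim]) auto
    then obtain N1 where N1: "\<And>N. N \<ge> N1 \<Longrightarrow>
        prob {\<omega> \<in> space M. \<bar>\<Sum>j\<in>{- int N..int N}. c n j * Y j \<omega>\<bar> > e} < \<rho>'"
      by (auto simp: eventually_sequentially)
    have "(\<Sum>j\<in>{- int N..int N}. tail_term \<alpha> h (c n j)) \<le> \<epsilon> / 2" if "N \<ge> N1" for N
    proof -
      have "(\<Sum>j\<in>{- int N..int N}. tail_term \<alpha> h (c n j))
          \<le> 4 * prob {\<omega> \<in> space M. \<bar>\<Sum>j\<in>{- int N..int N}. c n j * Y j \<omega>\<bar> > e}"
        using N1[OF that] by (intro bound) (auto simp: \<rho>'_def)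
      also have "\<dots> \<le> 4 * \<rho>'" using N1[OF that] by simp
      also have "\<dots> \<le> \<epsilon> / 2" by (simp add: \<rho>'_def)
      finally show ?thesis .
    qed
    then have "(\<Sum>\<^sub>\<infinity>j. tail_term \<alpha> h (c n j)) \<le> \<epsilon> / 2"
      by (rule infsum_le_of_symmetric_partial_sums[OF summable tail_term_nonneg])
    then show ?case using \<open>\<epsilon> > 0\<close> by simp
  qed
qed

end

theorem proposition9:
  fixes M :: "'a measure" and Y :: "int \<Rightarrow> 'a \<Rightarrow> real"
    and \<alpha> :: real and h :: "real \<Rightarrow> real"
    and c :: "nat \<Rightarrow> int \<Rightarrow> real" and V :: "nat \<Rightarrow> 'a \<Rightarrow> real"
  assumes ps: "prob_space M"
    and indep: "prob_space.indep_vars M (\<lambda>_. borel) Y UNIV"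
    and ident: "\<forall>j. distr M borel (Y j) = distr M borel (Y 1)"
    and alpha: "0 < \<alpha>" "\<alpha> < 2"
    and sv: "slowly_varying h"
    and tail: "\<forall>x>0. measure M {\<omega> \<in> space M. \<bar>Y 1 \<omega>\<bar> > x} = x powr (-\<alpha>) * h x"
    and mean0: "\<alpha> > 1 \<Longrightarrow> integrable M (Y 1) \<and> integral\<^sup>L M (Y 1) = 0"
    and symm: "\<alpha> = 1 \<Longrightarrow> distr M borel (\<lambda>\<omega>. - Y 1 \<omega>) = distr M borel (Y 1)"
    and csum: "\<forall>n. (\<lambda>j. tail_term \<alpha> h (c n j)) summable_on UNIV"
    and Vmeas: "\<forall>n. V n \<in> borel_measurable M"
    and Vdef: "\<forall>n. AE \<omega> in M.
                 (\<lambda>N. \<Sum>j\<in>{- int N..int N}. c n j * Y j \<omega>) \<longlonglongrightarrow> V n \<omega>"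
  shows "prob_space.tendsto_zero_in_prob M V \<longleftrightarrow>
           (\<lambda>n. \<Sum>\<^sub>\<infinity>j. tail_term \<alpha> h (c n j)) \<longlonglongrightarrow> 0"
proof -
  interpret prob_space M by (rule ps)
  have "Y 1 \<in> borel_measurable M"
    using indep unfolding indep_vars_def by auto
  then interpret iid_heavy_tailed M Y \<alpha> h
    using indep ident alpha sv tail mean0 symm
    by unfold_locales (auto simp: iid_heavy_tailed_axioms_def)
  show ?thesis
    using tendsto_zero_in_prob_if_tail_sums_tendsto[of c V] tail_sums_tendsto_if_tendsto_zero_in_prob[of c V]
      csum Vmeas Vdef by blast
qed

end
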